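(* Let $\mu$ be a finite Borel measure on $\Sigma$ and $\nu=\mu\circ\Pi^{-1}$. (i) Suppose $\mathcal{D}$ is two-dimensional. Then for every $x=\Pi(\omega)\in\Lambda$ with $\lim_{n\to\infty}R_n(\omega)/n=0$, \[\liminf_{r\to0}\frac{\log\nu(B(x,r))}{\log r}\ \ge\ \liminf_{n\to\infty}\frac{\log\mu(B_n(\omega))}{\log\prod_{\nu=1}^n b_{i_\nu}}.\] (ii) For every $x=\Pi(\omega)\in\Lambda$, \[\liminf_{r\to0}\frac{\log\nu(B(x,r))}{\log r}\ \le\ \liminf_{n\to\infty}\frac{\log\mu(B_n(\omega))}{\log\prod_{\nu=1}^n b_{i_\nu}}.\]
   Context: Standing setting (Lalley–Gatzouras system). Let $p\ge 1$ and $m_1,\dots,m_p\ge1$ be integers and $\mathcal{D}=\{(i,j):1\le i\le p,\ 1\le j\le m_i\}$. For $(i,j)\in\mathcal{D}$ let $S_{ij}(x)=\begin{pmatrix}a_{ij}&0\\0&b_i\end{pmatrix}x+\begin{pmatrix}c_{ij}\\ d_i\end{pmatrix}$ on $[0,1]^2$, where $0<a_{ij}\le b_i<1$, $0\le d_1\le\dots\le d_p<1$, $d_{i+1}-d_i\ge b_i$, $b_p+d_p\le 1$, and for each $i$: $0\le c_{i1}\le\dots\le c_{im_i}<1$, $c_{i(j+1)}-c_{ij}\ge a_{ij}$, $a_{im_i}+c_{im_i}\le1$. Let $\Sigma=\mathcal{D}^{\mathbb{N}}$, write $\omega=((i_\nu,j_\nu))_{\nu\ge1}$, $\Pi(\omega)=\lim_n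 S_{\omega_1}\circ\cdots\circ S_{\omega_n}([0,1]^2)$, $\Lambda=\Pi(\Sigma)$. Let $a_{\min}=\min_{(i,j)}a_{ij}$. Define $L_n(\omega)=\min\{l\ge1:\prod_{\nu=1}^l a_{i_\nu j_\nu}\le\prod_{\nu=1}^n b_{i_\nu}\}$ and the approximate symbolic square $B_n(\omega)=\{\omega'\in\Sigma:\omega'_\nu=\omega_\nu\ (1\le\nu\le L_n(\omega)),\ i'_\nu=i_\nu\ (L_n(\omega)<\nu\le n)\}$. $\mathcal{D}$ is called two-dimensional if there exist $(i_1,j_1),(i_2,j_2)\in\mathcal{D}$ with $i_1=i_2$, $j_1\ne j_2$, and there exist $(i_3,j_3),(i_4,j_4)\in\mathcal{D}$ with $i_3\ne i_4$. For $d\in\mathcal{D}$ let $R^d_n(\omega)=\min\{l>n:\omega_l=d\}-n$ and $R_n(\omega)=\max_{d\in\mathcal{D}}R^d_n(\omega)$. $B(x,r)$ is the closed (or open) ball in $\mathbb{R}^2$. *)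

theory Defs
  imports "HOL-Analysis.Analysis"
begin

text \<open>Sequences omega = (omega_1, omega_2, ...) are represented 0-based: w k = omega_(k+1).\<close>

definition digits :: "nat \<Rightarrow> (nat \<Rightarrow> nat) \<Rightarrow> (nat \<times> nat) set" where
  "digits p m = {(i, j). 1 \<le> i \<and> i \<le> p \<and> 1 \<le> j \<and> j \<le> m i}"

definition LG_system ::
  "nat \<Rightarrow> (nat \<Rightarrow> nat) \<Rightarrow> (nat \<Rightarrow> nat \<Rightarrow> real) \<Rightarrow> (nat \<Rightarrow> real) \<Rightarrow>
   (nat \<Rightarrow> nat \<Rightarrow> real) \<Rightarrow> (nat \<Rightarrow> real) \<Rightarrow> bool" where
  "LG_system p m a b c d \<longleftrightarrow>
     p \<ge> 1 \<and> (\<forall>i\<in>{1..p}. m i \<ge> 1) \<and>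
     (\<forall>(i, j)\<in>digits p m. 0 < a i j \<and> a i j \<le> b i \<and> b i < 1) \<and>
     0 \<le> d 1 \<and> (\<forall>i\<in>{1..<p}. d i \<le> d (i + 1)) \<and> d p < 1 \<and>
     (\<forall>i\<in>{1..<p}. d (i + 1) - d i \<ge> b i) \<and> b p + d p \<le> 1 \<and>
     (\<forall>i\<in>{1..p}.
        0 \<le> c i 1 \<and> (\<forall>j\<in>{1..<m i}. c i j \<le> c i (j + 1)) \<and> c i (m i) < 1 \<and>
        (\<forall>j\<in>{1..<m i}. c i (j + 1) - c i j \<ge> a i j) \<and> a i (m i) + c i (m i) \<le> 1)"

definition Smap :: "(nat \<Rightarrow> nat \<Rightarrow> real) \<Rightarrow> (nat \<Rightarrow> real) \<Rightarrow> (nat \<Rightarrow> nat \<Rightarrow> real) \<Rightarrow>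
    (nat \<Rightarrow> real) \<Rightarrow> nat \<times> nat \<Rightarrow> real \<times> real \<Rightarrow> real \<times> real" where
  "Smap a b c d ij z = (a (fst ij) (snd ij) * fst z + c (fst ij) (snd ij), b (fst ij) * snd z + d (fst ij))"

primrec Scomp :: "(nat \<Rightarrow> nat \<Rightarrow> real) \<Rightarrow> (nat \<Rightarrow> real) \<Rightarrow> (nat \<Rightarrow> nat \<Rightarrow> real) \<Rightarrow>
    (nat \<Rightarrow> real) \<Rightarrow> (nat \<Rightarrow> nat \<times> nat) \<Rightarrow> nat \<Rightarrow> real \<times> real \<Rightarrow> real \<times> real" where
  "Scomp a b c d w 0 = id"
| "Scomp a b c d w (Suc n) = Scomp a b c d w n \<circ> Smap a b c d (w n)"

definition unit_square :: "(real \<times> real) set" where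
  "unit_square = {0..1} \<times> {0..1}"

definition SigmaD :: "nat \<Rightarrow> (nat \<Rightarrow> nat) \<Rightarrow> (nat \<Rightarrow> nat \<times> nat) set" where
  "SigmaD p m = {w. \<forall>k. w k \<in> digits p m}"

text \<open>Coding map: Pi(omega) is the limit (= the unique point of the intersection) of the
  nested sets S_(omega_1) o ... o S_(omega_n)([0,1]^2).\<close>
definition coding :: "(nat \<Rightarrow> nat \<Rightarrow> real) \<Rightarrow> (nat \<Rightarrow> real) \<Rightarrow> (nat \<Rightarrow> nat \<Rightarrow> real) \<Rightarrow>
    (nat \<Rightarrow> real) \<Rightarrow> (nat \<Rightarrow> nat \<times> nat) \<Rightarrow> real \<times> real" where
  "coding a b c d w = (THE z. z \<in> (\<Inter>n. Scomp a b c d w n ` unit_square))"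

definition bprod :: "(nat \<Rightarrow> real) \<Rightarrow> (nat \<Rightarrow> nat \<times> nat) \<Rightarrow> nat \<Rightarrow> real" where
  "bprod b w n = (\<Prod>k<n. b (fst (w k)))"

definition aprod :: "(nat \<Rightarrow> nat \<Rightarrow> real) \<Rightarrow> (nat \<Rightarrow> nat \<times> nat) \<Rightarrow> nat \<Rightarrow> real" where
  "aprod a w l = (\<Prod>k<l. a (fst (w k)) (snd (w k)))"

definition Lfun :: "(nat \<Rightarrow> nat \<Rightarrow> real) \<Rightarrow> (nat \<Rightarrow> real) \<Rightarrow> nat \<Rightarrow> (nat \<Rightarrow> nat \<times> nat) \<Rightarrow> nat" where
  "Lfun a b n w = (LEAST l. 1 \<le> l \<and> aprod a w l \<le> bprod b w n)"

definition approx_square :: "nat \<Rightarrow> (nat \<Rightarrow> nat) \<Rightarrow> (nat \<Rightarrow> nat \<Rightarrow> real) \<Rightarrow> (nat \<Rightarrow> real) \<Rightarrow>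
    nat \<Rightarrow> (nat \<Rightarrow> nat \<times> nat) \<Rightarrow> (nat \<Rightarrow> nat \<times> nat) set" where
  "approx_square p m a b n w =
     {w' \<in> SigmaD p m. (\<forall>k < Lfun a b n w. w' k = w k) \<and>
        (\<forall>k. Lfun a b n w \<le> k \<and> k < n \<longrightarrow> fst (w' k) = fst (w k))}"

definition two_dimensional :: "nat \<Rightarrow> (nat \<Rightarrow> nat) \<Rightarrow> bool" where
  "two_dimensional p m \<longleftrightarrow>
     (\<exists>(i1, j1)\<in>digits p m. \<exists>(i2, j2)\<in>digits p m. i1 = i2 \<and> j1 \<noteq> j2) \<and>
     (\<exists>(i3, j3)\<in>digits p m. \<exists>(i4, j4)\<in>digits p m. i3 \<noteq> i4)"

text \<open>R^d_n(omega) = min{l > n : omega_l = d} - n (1-based); infinite if d does not occur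
  after position n. In 0-based form: min{k >= n : w k = d} + 1 - n.\<close>
definition Rd :: "nat \<Rightarrow> (nat \<Rightarrow> nat \<times> nat) \<Rightarrow> nat \<times> nat \<Rightarrow> enat" where
  "Rd n w dd = (if \<exists>k\<ge>n. w k = dd then enat ((LEAST k. n \<le> k \<and> w k = dd) + 1 - n) else \<infinity>)"

definition Rmax :: "nat \<Rightarrow> (nat \<Rightarrow> nat) \<Rightarrow> nat \<Rightarrow> (nat \<Rightarrow> nat \<times> nat) \<Rightarrow> enat" where
  "Rmax p m n w = Max (Rd n w ` digits p m)"

definition elog :: "real \<Rightarrow> ereal" where
  "elog t = (if t > 0 then ereal (ln t) else -\<infinity>)"

end

theory Submission
  imports Defs
begin

(* Both coordinates of Pi(w) are one-dimensional digit expansions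
   sum_k oc_k * prod_{j<k} sc_j, i.e. points of nested intervals (first section).
   Two geometric facts about these intervals carry the proof:
   - sequences sharing the digits that define B_n(w) have images within 2 beta_n of
     Pi(w); comparing the scales 2 beta_n and beta_n gives part (ii);
   - conversely, if every digit recurs in windows of length M, the first differing
     digit separates two points by at least kappa * amin^(M+1) * beta_n, so the preimage
     of a ball of this radius lies in B_n(w).  The hypothesis R_n(w)/n -> 0 provides
     windows M n = o(n), so this radius is logarithmically equivalent to beta_n: part (i).
   The passage from such inclusions to lower limits is the abstract comparison
   principle Liminf_transfer. *)

section \<open>One-dimensional digit expansions\<close>

text \<open>Each coordinate of the coding map is a digit expansion
  \<open>\<Sum>k. oc k * (\<Prod>j<k. sc j)\<close>: the point reached by the nested intervals
  \<open>[partial_n, partial_n + \<Prod>j<n. sc j]\<close>.\<close>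

definition expansion :: "(nat \<Rightarrow> real) \<Rightarrow> (nat \<Rightarrow> real) \<Rightarrow> real" where
  "expansion sc oc = (\<Sum>k. oc k * (\<Prod>j<k. sc j))"

abbreviation partial_expansion :: "(nat \<Rightarrow> real) \<Rightarrow> (nat \<Rightarrow> real) \<Rightarrow> nat \<Rightarrow> real" where
  "partial_expansion sc oc n \<equiv> \<Sum>k<n. oc k * (\<Prod>j<k. sc j)"

text \<open>The position of the point inside its level-\<open>n\<close> interval, rescaled to \<open>[0,1]\<close>.\<close>
abbreviation tail_expansion :: "(nat \<Rightarrow> real) \<Rightarrow> (nat \<Rightarrow> real) \<Rightarrow> nat \<Rightarrow> real" where
  "tail_expansion sc oc n \<equiv> expansion (\<lambda>k. sc (k + n)) (\<lambda>k. oc (k + n))"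

definition admissible :: "real \<Rightarrow> (nat \<Rightarrow> real) \<Rightarrow> (nat \<Rightarrow> real) \<Rightarrow> bool" where
  "admissible \<sigma> sc oc \<longleftrightarrow> \<sigma> < 1 \<and> (\<forall>k. 0 < sc k \<and> sc k \<le> \<sigma> \<and> 0 \<le> oc k \<and> oc k + sc k \<le> 1)"

lemma admissibleD:
  assumes "admissible \<sigma> sc oc"
  shows "0 < sc k" "sc k \<le> 1" "sc k \<le> \<sigma>" "0 \<le> oc k" "oc k + sc k \<le> 1" "0 \<le> \<sigma>" "\<sigma> < 1"
proof -
  have "\<sigma> < 1" "\<And>k. 0 < sc k \<and> sc k \<le> \<sigma> \<and> 0 \<le> oc k \<and> oc k + sc k \<le> 1"
    using assms unfolding admissible_def by auto
  from this(1) this(2)[of k] this(2)[of 0]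
  show "0 < sc k" "sc k \<le> 1" "sc k \<le> \<sigma>" "0 \<le> oc k" "oc k + sc k \<le> 1" "0 \<le> \<sigma>" "\<sigma> < 1"
    by linarith+
qed

lemma admissible_shift: "admissible \<sigma> sc oc \<Longrightarrow> admissible \<sigma> (\<lambda>k. sc (k + n)) (\<lambda>k. oc (k + n))"
  by (simp add: admissible_def)

lemma admissible_Suc: "admissible \<sigma> sc oc \<Longrightarrow> admissible \<sigma> (\<lambda>k. sc (Suc k)) (\<lambda>k. oc (Suc k))"
  using admissible_shift[of \<sigma> sc oc 1] by simp

lemma prod_lessThan_add: "(\<Prod>j<n + (k::nat). f j) = (\<Prod>j<n. f j) * (\<Prod>j<k. f (j + n) :: real)"
  by (induction k) (auto simp: ac_simps)

lemma cylinder_length: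
  assumes "admissible \<sigma> sc oc"
  shows "0 < (\<Prod>j<n. sc j)" "(\<Prod>j<n. sc j) \<le> \<sigma> ^ n" "(\<Prod>j<n. sc j) \<le> 1"
proof -
  show "0 < (\<Prod>j<n. sc j)" using admissibleD(1)[OF assms] by (intro prod_pos) auto
  have "(\<Prod>j<n. sc j) \<le> (\<Prod>j<n. \<sigma>)"
    using admissibleD[OF assms] by (intro prod_mono) (auto simp: less_imp_le)
  then show "(\<Prod>j<n. sc j) \<le> \<sigma> ^ n" by simp
  also have "\<dots> \<le> 1" using admissibleD[OF assms] by (simp add: power_le_one)
  finally show "(\<Prod>j<n. sc j) \<le> 1" .
qed

lemma prod_lessThan_lower:
  fixes f :: "nat \<Rightarrow> real"
  assumes f: "\<And>j. lo \<le> f j" "\<And>j. f j \<le> 1" and lo: "0 \<le> lo" and N: "N \<le> n + M"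
  shows "(\<Prod>j<n. f j) * lo ^ M \<le> (\<Prod>j<N. f j)"
proof (cases "n \<le> N")
  case True
  have "lo ^ M \<le> lo ^ (N - n)"
    using lo f(1,2)[of 0] N by (intro power_decreasing) auto
  also have "\<dots> \<le> (\<Prod>j<N - n. f (j + n))"
    using prod_mono[of "{..<N - n}" "\<lambda>_. lo" "\<lambda>j. f (j + n)"] lo f by simp
  finally show ?thesis
    using prod_lessThan_add[of f n "N - n"] True lo f
    by (simp add: mult_left_mono prod_nonneg order_trans[OF lo])
next
  case False
  have f0: "0 \<le> f j" for j using order_trans[OF lo f(1)] .
  have "(\<Prod>j<n. f j) * lo ^ M \<le> (\<Prod>j<n. f j)"
    using lo f(1,2)[of 0] f0 by (simp add: mult_left_le prod_nonneg power_le_one)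
  also have "\<dots> = (\<Prod>j<N. f j) * (\<Prod>j<n - N. f (j + N))"
    using prod_lessThan_add[of f N "n - N"] False by simp
  also have "\<dots> \<le> (\<Prod>j<N. f j)"
    using f0 f(2) by (simp add: mult_left_le prod_nonneg prod_le_1)
  finally show ?thesis .
qed

lemma expansion_summable:
  assumes adm: "admissible \<sigma> sc oc"
  shows "summable (\<lambda>k. oc k * (\<Prod>j<k. sc j))"
proof (rule summable_comparison_test')
  show "summable (\<lambda>k. \<sigma> ^ k)"
    using admissibleD(6,7)[OF adm] by (simp add: summable_geometric)
  fix k
  have "norm (oc k * (\<Prod>j<k. sc j)) = oc k * (\<Prod>j<k. sc j)"
    using admissibleD(4)[OF adm, of k] cylinder_length(1)[OF adm, of k] by simp
  also have "\<dots> \<le> (\<Prod>j<k. sc j)"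
    using admissibleD(1-5)[OF adm, of k] cylinder_length(1)[OF adm, of k] by (simp add: mult_left_le_one_le)
  also have "\<dots> \<le> \<sigma> ^ k" by (rule cylinder_length(2)[OF adm])
  finally show "norm (oc k * (\<Prod>j<k. sc j)) \<le> \<sigma> ^ k" .
qed

lemma partial_expansion_mono:
  assumes adm: "admissible \<sigma> sc oc" and "n \<le> n'"
  shows "partial_expansion sc oc n \<le> partial_expansion sc oc n'"
  using assms admissibleD(4)[OF adm] cylinder_length(1)[OF adm]
  by (intro sum_mono2) (auto intro: mult_nonneg_nonneg less_imp_le)

lemma right_endpoint_antimono:
  assumes adm: "admissible \<sigma> sc oc" and "n \<le> n'"
  shows "partial_expansion sc oc n' + (\<Prod>j<n'. sc j) \<le> partial_expansion sc oc n + (\<Prod>j<n. sc j)"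
proof (rule lift_Suc_antimono_le[OF _ \<open>n \<le> n'\<close>])
  fix k
  have "(oc k + sc k) * (\<Prod>j<k. sc j) \<le> (\<Prod>j<k. sc j)"
    using admissibleD(5)[OF adm, of k] cylinder_length(1)[OF adm, of k] by (simp add: mult_left_le_one_le)
  then show "partial_expansion sc oc (Suc k) + (\<Prod>j<Suc k. sc j) \<le> partial_expansion sc oc k + (\<Prod>j<k. sc j)"
    by (simp add: algebra_simps)
qed

lemma expansion_step:
  assumes adm: "admissible \<sigma> sc oc"
  shows "expansion sc oc = oc 0 + sc 0 * expansion (\<lambda>k. sc (Suc k)) (\<lambda>k. oc (Suc k))"
proof -
  have tail: "summable (\<lambda>k. oc (Suc k) * (\<Prod>j<k. sc (Suc j)))"
    by (rule expansion_summable[OF admissible_Suc[OF adm]])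
  have "expansion sc oc = oc 0 + (\<Sum>k. oc (Suc k) * (\<Prod>j<Suc k. sc j))"
    using suminf_split_head[OF expansion_summable[OF adm]] by (simp add: expansion_def)
  also have "(\<Sum>k. oc (Suc k) * (\<Prod>j<Suc k. sc j)) = sc 0 * expansion (\<lambda>k. sc (Suc k)) (\<lambda>k. oc (Suc k))"
    unfolding expansion_def prod.lessThan_Suc_shift using suminf_mult[OF tail, of "sc 0"]
    by (simp add: ac_simps)
  finally show ?thesis .
qed

lemma expansion_split:
  assumes "admissible \<sigma> sc oc"
  shows "expansion sc oc = partial_expansion sc oc n + (\<Prod>j<n. sc j) * tail_expansion sc oc n"
  using assms
proof (induction n arbitrary: sc oc)
  case (Suc n)
  have IH: "expansion (\<lambda>k. sc (Suc k)) (\<lambda>k. oc (Suc k))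
      = partial_expansion (\<lambda>k. sc (Suc k)) (\<lambda>k. oc (Suc k)) n
        + (\<Prod>j<n. sc (Suc j)) * expansion (\<lambda>k. sc (Suc (k + n))) (\<lambda>k. oc (Suc (k + n)))"
    using Suc.IH[OF admissible_Suc[OF Suc.prems]] by simp
  show ?case
    unfolding expansion_step[OF Suc.prems] IH
    by (simp add: sum.lessThan_Suc_shift prod.lessThan_Suc_shift sum_distrib_left ring_distribs ac_simps
        del: sum.lessThan_Suc prod.lessThan_Suc)
qed simp

lemma expansion_unit_interval:
  assumes adm: "admissible \<sigma> sc oc"
  shows "0 \<le> expansion sc oc" "expansion sc oc \<le> 1"
proof -
  show "0 \<le> expansion sc oc"
    unfolding expansion_def using admissibleD(4)[OF adm] cylinder_length(1)[OF adm]
    by (intro suminf_nonneg expansion_summable[OF adm]) (auto intro: mult_nonneg_nonneg less_imp_le)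
  show "expansion sc oc \<le> 1"
    unfolding expansion_def
  proof (rule suminf_le_const[OF expansion_summable[OF adm]])
    fix n
    show "partial_expansion sc oc n \<le> 1"
      using right_endpoint_antimono[OF adm, of 0 n] cylinder_length(1)[OF adm, of n] by simp
  qed
qed

lemma tail_unit_interval:
  assumes "admissible \<sigma> sc oc"
  shows "0 \<le> tail_expansion sc oc n" "tail_expansion sc oc n \<le> 1"
  using expansion_unit_interval[OF admissible_shift[OF assms]] by auto

lemma expansion_first_interval:
  assumes adm: "admissible \<sigma> sc oc"
  shows "oc 0 \<le> expansion sc oc" "expansion sc oc \<le> oc 0 + sc 0"
  using expansion_step[OF adm] expansion_unit_interval[OF admissible_Suc[OF adm]]
    admissibleD(1)[OF adm, of 0] by (simp_all add: mult_left_le)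

lemma tail_first_interval:
  assumes "admissible \<sigma> sc oc"
  shows "oc n \<le> tail_expansion sc oc n" "tail_expansion sc oc n \<le> oc n + sc n"
  using expansion_first_interval[OF admissible_shift[OF assms, of n]] by simp_all

text \<open>The level-\<open>n\<close> interval has length at most \<open>\<sigma>^n\<close>; this pins down the expansion
  as the unique point of the nested intervals.\<close>
lemma expansion_level_approx:
  assumes adm: "admissible \<sigma> sc oc" and u: "0 \<le> u" "u \<le> 1"
  shows "\<bar>(\<Prod>j<n. sc j) * u + partial_expansion sc oc n - expansion sc oc\<bar> \<le> \<sigma> ^ n"
proof -
  have "\<bar>u - tail_expansion sc oc n\<bar> \<le> 1" using tail_unit_interval[OF adm, of n] u by auto
  then have "\<bar>(\<Prod>j<n. sc j) * (u - tail_expansion sc oc n)\<bar> \<le> (\<Prod>j<n. sc j)"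
    using cylinder_length(1)[OF adm, of n] by (simp add: abs_mult mult_left_le)
  then show ?thesis
    using expansion_split[OF adm, of n] cylinder_length(2)[OF adm, of n] by (simp add: algebra_simps)
qed

lemma expansion_common_prefix:
  assumes adm: "admissible \<sigma> sc oc" and adm': "admissible \<sigma>' sc' oc'"
    and agree: "\<forall>j<k. sc j = sc' j \<and> oc j = oc' j"
  shows "expansion sc' oc' - expansion sc oc = (\<Prod>j<k. sc j) * (tail_expansion sc' oc' k - tail_expansion sc oc k)"
    and "\<bar>expansion sc' oc' - expansion sc oc\<bar> \<le> (\<Prod>j<k. sc j)"
proof -
  have "partial_expansion sc oc k = partial_expansion sc' oc' k" "(\<Prod>j<k. sc j) = (\<Prod>j<k. sc' j)"
    using agree by (auto intro!: sum.cong prod.cong arg_cong2[where f="(*)"])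
  then show diff: "expansion sc' oc' - expansion sc oc = (\<Prod>j<k. sc j) * (tail_expansion sc' oc' k - tail_expansion sc oc k)"
    using expansion_split[OF adm, of k] expansion_split[OF adm', of k] by (simp add: algebra_simps)
  have "\<bar>tail_expansion sc' oc' k - tail_expansion sc oc k\<bar> \<le> 1"
    using tail_unit_interval[OF adm, of k] tail_unit_interval[OF adm', of k] by auto
  then show "\<bar>expansion sc' oc' - expansion sc oc\<bar> \<le> (\<Prod>j<k. sc j)"
    unfolding diff abs_mult using cylinder_length(1)[OF adm, of k] by (simp add: mult_left_le)
qed

lemma separation_left:
  assumes adm: "admissible \<sigma> sc oc" and adm': "admissible \<sigma>' sc' oc'"
    and agree: "\<forall>j<k. sc j = sc' j \<and> oc j = oc' j"
    and gap: "oc' k + sc' k \<le> oc k" and kN: "k < N"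
  shows "(\<Prod>j<N. sc j) * tail_expansion sc oc N \<le> expansion sc oc - expansion sc' oc'"
proof -
  have P: "0 \<le> (\<Prod>j<k. sc j)" using cylinder_length(1)[OF adm] less_imp_le by blast
  have "tail_expansion sc' oc' k \<le> oc k"
    using tail_first_interval(2)[OF adm', of k] gap by linarith
  then have "expansion sc' oc' - expansion sc oc \<le> (\<Prod>j<k. sc j) * (oc k - tail_expansion sc oc k)"
    unfolding expansion_common_prefix(1)[OF adm adm' agree] using P by (intro mult_left_mono) auto
  also have "\<dots> = partial_expansion sc oc (Suc k) - expansion sc oc"
    using expansion_split[OF adm, of k] by (simp add: algebra_simps)
  also have "\<dots> \<le> partial_expansion sc oc N - expansion sc oc"
    using partial_expansion_mono[OF adm, of "Suc k" N] kN by simp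
  also have "\<dots> = - (\<Prod>j<N. sc j) * tail_expansion sc oc N"
    using expansion_split[OF adm, of N] by simp
  finally show ?thesis by simp
qed

lemma separation_right:
  assumes adm: "admissible \<sigma> sc oc" and adm': "admissible \<sigma>' sc' oc'"
    and agree: "\<forall>j<k. sc j = sc' j \<and> oc j = oc' j"
    and gap: "oc k + sc k \<le> oc' k" and kN: "k < N"
  shows "(\<Prod>j<N. sc j) * (1 - tail_expansion sc oc N) \<le> expansion sc' oc' - expansion sc oc"
proof -
  have P: "0 \<le> (\<Prod>j<k. sc j)" using cylinder_length(1)[OF adm] less_imp_le by blast
  have "(\<Prod>j<N. sc j) * (1 - tail_expansion sc oc N)
      = partial_expansion sc oc N + (\<Prod>j<N. sc j) - expansion sc oc"
    using expansion_split[OF adm, of N] by (simp add: algebra_simps)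
  also have "\<dots> \<le> partial_expansion sc oc (Suc k) + (\<Prod>j<Suc k. sc j) - expansion sc oc"
    using right_endpoint_antimono[OF adm, of "Suc k" N] kN by simp
  also have "\<dots> = (\<Prod>j<k. sc j) * (oc k + sc k - tail_expansion sc oc k)"
    using expansion_split[OF adm, of k] by (simp add: algebra_simps)
  also have "\<dots> \<le> (\<Prod>j<k. sc j) * (tail_expansion sc' oc' k - tail_expansion sc oc k)"
    using tail_first_interval(1)[OF adm', of k] gap P by (intro mult_left_mono) auto
  also have "\<dots> = expansion sc' oc' - expansion sc oc"
    using expansion_common_prefix(1)[OF adm adm' agree] by simp
  finally show ?thesis .
qed

text \<open>Quantitative separation of two expansions whose digits first differ at \<open>k\<close>, with
  disjoint \<open>k\<close>-th intervals: it suffices that soon after \<open>k\<close> the first sequence uses a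
  digit interval at distance \<open>\<ge> \<kappa>\<close> from the left end and one at distance
  \<open>\<ge> \<kappa>\<close> from the right end of \<open>[0,1]\<close>.\<close>
lemma expansion_first_difference:
  assumes adm: "admissible \<sigma> sc oc" and adm': "admissible \<sigma>' sc' oc'"
    and agree: "\<forall>j<k. sc j = sc' j \<and> oc j = oc' j"
    and disjoint: "oc k + sc k \<le> oc' k \<or> oc' k + sc' k \<le> oc k"
    and lo: "\<And>j. lo \<le> sc j" "0 \<le> lo"
    and left_digit: "k < Nl" "Nl \<le> n + M" "\<kappa> \<le> oc Nl"
    and right_digit: "k < Nr" "Nr \<le> n + M" "oc Nr + sc Nr \<le> 1 - \<kappa>"
    and \<kappa>: "0 \<le> \<kappa>"
  shows "\<kappa> * lo ^ M * (\<Prod>j<n. sc j) \<le> \<bar>expansion sc' oc' - expansion sc oc\<bar>"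
proof -
  have length_bound: "(\<Prod>j<n. sc j) * lo ^ M \<le> (\<Prod>j<N. sc j)" if "N \<le> n + M" for N
    using prod_lessThan_lower[OF lo(1) admissibleD(2)[OF adm] lo(2) that] .
  have "0 \<le> (\<Prod>j<n. sc j) * lo ^ M" using cylinder_length(1)[OF adm, of n] lo(2) by simp
  from disjoint show ?thesis
  proof
    assume gap: "oc k + sc k \<le> oc' k"
    have "\<kappa> \<le> 1 - tail_expansion sc oc Nr"
      using tail_first_interval(2)[OF adm, of Nr] right_digit(3) by linarith
    then have "\<kappa> * ((\<Prod>j<n. sc j) * lo ^ M) \<le> (1 - tail_expansion sc oc Nr) * (\<Prod>j<Nr. sc j)"
      using length_bound[OF right_digit(2)] \<kappa> \<open>0 \<le> (\<Prod>j<n. sc j) * lo ^ M\<close> by (intro mult_mono) auto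
    also have "\<dots> \<le> expansion sc' oc' - expansion sc oc"
      using separation_right[OF adm adm' agree gap right_digit(1)] by (simp add: mult.commute)
    finally show ?thesis by (simp add: ac_simps)
  next
    assume gap: "oc' k + sc' k \<le> oc k"
    have "\<kappa> \<le> tail_expansion sc oc Nl"
      using tail_first_interval(1)[OF adm, of Nl] left_digit(3) by linarith
    then have "\<kappa> * ((\<Prod>j<n. sc j) * lo ^ M) \<le> tail_expansion sc oc Nl * (\<Prod>j<Nl. sc j)"
      using length_bound[OF left_digit(2)] \<kappa> \<open>0 \<le> (\<Prod>j<n. sc j) * lo ^ M\<close> by (intro mult_mono) auto
    also have "\<dots> \<le> expansion sc oc - expansion sc' oc'"
      using separation_left[OF adm adm' agree gap left_digit(1)] by (simp add: mult.commute)
    finally show ?thesis by (simp add: ac_simps)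
  qed
qed

section \<open>Geometry of a Lalley--Gatzouras system\<close>

definition hscale :: "(nat \<Rightarrow> nat \<Rightarrow> real) \<Rightarrow> (nat \<Rightarrow> nat \<times> nat) \<Rightarrow> nat \<Rightarrow> real" where
  "hscale a w k = a (fst (w k)) (snd (w k))"

definition hshift :: "(nat \<Rightarrow> nat \<Rightarrow> real) \<Rightarrow> (nat \<Rightarrow> nat \<times> nat) \<Rightarrow> nat \<Rightarrow> real" where
  "hshift c w k = c (fst (w k)) (snd (w k))"

definition vscale :: "(nat \<Rightarrow> real) \<Rightarrow> (nat \<Rightarrow> nat \<times> nat) \<Rightarrow> nat \<Rightarrow> real" where
  "vscale b w k = b (fst (w k))"

definition vshift :: "(nat \<Rightarrow> real) \<Rightarrow> (nat \<Rightarrow> nat \<times> nat) \<Rightarrow> nat \<Rightarrow> real" where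
  "vshift d w k = d (fst (w k))"

lemma Scomp_formula:
  "Scomp a b c d w n z =
    ((\<Prod>j<n. hscale a w j) * fst z + partial_expansion (hscale a w) (hshift c w) n,
     (\<Prod>j<n. vscale b w j) * snd z + partial_expansion (vscale b w) (vshift d w) n)"
  by (induction n arbitrary: z) (simp_all add: Smap_def hscale_def hshift_def vscale_def vshift_def algebra_simps)

lemma chain_mono:
  fixes f :: "nat \<Rightarrow> real"
  assumes "\<forall>j. lo \<le> j \<and> j < hi \<longrightarrow> f j \<le> f (j + 1)" "lo \<le> i" "i \<le> i'" "i' \<le> hi"
  shows "f i \<le> f i'"
  using assms(3,4)
proof (induction i' rule: dec_induct)
  case (step n)
  then have "f n \<le> f (n + 1)" using assms(1,2) by auto
  then show ?case using step by simp
qed simp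

lemma digits_finite: "finite (digits p m)"
proof (rule finite_subset)
  show "digits p m \<subseteq> {1..p} \<times> {1..Max (m ` {1..p})}"
  proof (clarsimp simp: digits_def)
    fix i j assume "Suc 0 \<le> i" "i \<le> p" "j \<le> m i"
    moreover have "m i \<le> Max (m ` {Suc 0..p})" using calculation by (intro Max_ge) auto
    ultimately show "j \<le> Max (m ` {Suc 0..p})" by linarith
  qed
qed simp

locale lg_system =
  fixes p :: nat and m :: "nat \<Rightarrow> nat" and a c :: "nat \<Rightarrow> nat \<Rightarrow> real" and b d :: "nat \<Rightarrow> real"
  assumes LG: "LG_system p m a b c d"
begin

lemma LG_facts:
  "1 \<le> p" "\<forall>i\<in>{1..p}. 1 \<le> m i"
  "\<forall>(i, j)\<in>digits p m. 0 < a i j \<and> a i j \<le> b i \<and> b i < 1"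
  "0 \<le> d 1" "\<forall>i\<in>{1..<p}. d i \<le> d (i + 1)" "d p < 1"
  "\<forall>i\<in>{1..<p}. d (i + 1) - d i \<ge> b i" "b p + d p \<le> 1"
  "\<forall>i\<in>{1..p}. 0 \<le> c i 1 \<and> (\<forall>j\<in>{1..<m i}. c i j \<le> c i (j + 1)) \<and> c i (m i) < 1 \<and>
     (\<forall>j\<in>{1..<m i}. c i (j + 1) - c i j \<ge> a i j) \<and> a i (m i) + c i (m i) \<le> 1"
  using LG unfolding LG_system_def by blast+

lemma row_digit: "i \<in> {1..p} \<Longrightarrow> (i, 1) \<in> digits p m"
  using LG_facts(2) by (auto simp: digits_def)

lemma digit_row: "(i, j) \<in> digits p m \<Longrightarrow> i \<in> {1..p}"
  by (simp add: digits_def)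

lemma digit_ab: "(i, j) \<in> digits p m \<Longrightarrow> 0 < a i j \<and> a i j \<le> b i \<and> b i < 1"
  using LG_facts(3) by blast

lemma b_bounds: "i \<in> {1..p} \<Longrightarrow> 0 < b i \<and> b i < 1"
  using digit_ab[OF row_digit] by force

lemma d_gap:
  assumes "1 \<le> i" "i < i'" "i' \<le> p"
  shows "d i + b i \<le> d i'"
proof -
  have "d (i + 1) \<le> d i'" using assms LG_facts(5) by (intro chain_mono[where lo=1 and hi=p]) auto
  moreover have "b i \<le> d (i + 1) - d i" using LG_facts(7) assms by auto
  ultimately show ?thesis by linarith
qed

lemma d_nonneg: "i \<in> {1..p} \<Longrightarrow> 0 \<le> d i"
  using chain_mono[of 1 p d 1 i] LG_facts(4,5) by auto

lemma d_b_le1: assumes "i \<in> {1..p}" shows "d i + b i \<le> 1"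
proof (cases "i = p")
  case False
  then show ?thesis
    using d_gap[of i p] assms LG_facts(8) b_bounds[of p] LG_facts(1) by force
qed (use LG_facts(8) in simp)

lemma c_gap:
  assumes "i \<in> {1..p}" "1 \<le> j" "j < j'" "j' \<le> m i"
  shows "c i j + a i j \<le> c i j'"
proof -
  have "\<forall>j\<in>{1..<m i}. c i j \<le> c i (j + 1)" "\<forall>j\<in>{1..<m i}. c i (j + 1) - c i j \<ge> a i j"
    using LG_facts(9) assms(1) by blast+
  then have "c i (j + 1) \<le> c i j'" and "a i j \<le> c i (j + 1) - c i j"
    using assms by (auto intro: chain_mono[where lo=1 and hi="m i"])
  then show ?thesis by linarith
qed

lemma c_nonneg: assumes "(i, j) \<in> digits p m" shows "0 \<le> c i j"
proof -
  have "\<forall>j\<in>{1..<m i}. c i j \<le> c i (j + 1)" "0 \<le> c i 1"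
    using LG_facts(9) assms by (auto simp: digits_def)
  then show ?thesis using chain_mono[of 1 "m i" "c i" 1 j] assms by (auto simp: digits_def)
qed

lemma c_a_le1: assumes dig: "(i, j) \<in> digits p m" shows "c i j + a i j \<le> 1"
proof -
  have i: "i \<in> {1..p}" and last: "(i, m i) \<in> digits p m"
    using dig LG_facts(2) by (auto simp: digits_def)
  have "a i (m i) + c i (m i) \<le> 1" using LG_facts(9) i by blast
  moreover have "c i j + a i j \<le> c i (m i)" if "j \<noteq> m i"
    using c_gap[OF i, of j "m i"] that dig by (auto simp: digits_def)
  ultimately show ?thesis using digit_ab[OF last] by (cases "j = m i") auto
qed

lemma c_last_lt1: "i \<in> {1..p} \<Longrightarrow> c i (m i) < 1"
  using LG_facts(9) by blast

definition \<sigma> :: real where "\<sigma> = Max (b ` {1..p})"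

definition amin :: real where "amin = Min ((\<lambda>(i, j). a i j) ` digits p m)"

lemma sigma_bounds: "0 \<le> \<sigma>" "\<sigma> < 1" "i \<in> {1..p} \<Longrightarrow> b i \<le> \<sigma>"
proof -
  show le: "i \<in> {1..p} \<Longrightarrow> b i \<le> \<sigma>" for i unfolding \<sigma>_def by (rule Max_ge) auto
  show "\<sigma> < 1" unfolding \<sigma>_def using LG_facts(1) b_bounds by (subst Max_less_iff) auto
  show "0 \<le> \<sigma>" using le[of 1] b_bounds[of 1] LG_facts(1) by force
qed

lemma amin_le_a: "(i, j) \<in> digits p m \<Longrightarrow> amin \<le> a i j"
  unfolding amin_def using digits_finite by (force intro: Min_le)

lemma amin_bounds: "0 < amin" "amin < 1"
proof -
  have "amin \<in> (\<lambda>(i, j). a i j) ` digits p m"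
    unfolding amin_def using digits_finite row_digit[of 1] LG_facts(1) by (intro Min_in) auto
  then show "0 < amin" using digit_ab by auto
  show "amin < 1"
    using amin_le_a[OF row_digit[of 1]] digit_ab[OF row_digit[of 1]] LG_facts(1) by force
qed

lemma symbol_digit: "w \<in> SigmaD p m \<Longrightarrow> (fst (w k), snd (w k)) \<in> digits p m"
  by (simp add: SigmaD_def)

lemma symbol_row: "w \<in> SigmaD p m \<Longrightarrow> fst (w k) \<in> {1..p}"
  using symbol_digit digit_row by blast

lemma admissible_horizontal:
  assumes w: "w \<in> SigmaD p m"
  shows "admissible \<sigma> (hscale a w) (hshift c w)"
  unfolding admissible_def hscale_def hshift_def
proof (intro conjI allI sigma_bounds(2))
  fix k
  note dig = symbol_digit[OF w, of k]
  show "0 < a (fst (w k)) (snd (w k))" "0 \<le> c (fst (w k)) (snd (w k))"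
    "c (fst (w k)) (snd (w k)) + a (fst (w k)) (snd (w k)) \<le> 1"
    using digit_ab[OF dig] c_nonneg[OF dig] c_a_le1[OF dig] by auto
  show "a (fst (w k)) (snd (w k)) \<le> \<sigma>"
    using digit_ab[OF dig] sigma_bounds(3)[OF symbol_row[OF w, of k]] by linarith
qed

lemma admissible_vertical:
  assumes w: "w \<in> SigmaD p m"
  shows "admissible \<sigma> (vscale b w) (vshift d w)"
  unfolding admissible_def vscale_def vshift_def
  using b_bounds[OF symbol_row[OF w]] sigma_bounds(2) sigma_bounds(3)[OF symbol_row[OF w]]
    d_nonneg[OF symbol_row[OF w]] d_b_le1[OF symbol_row[OF w]]
  by (simp add: add.commute)

lemma scale_bounds:
  assumes w: "w \<in> SigmaD p m"
  shows "amin \<le> hscale a w k" "hscale a w k \<le> 1" "amin \<le> vscale b w k" "vscale b w k \<le> 1"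
proof -
  note dig = symbol_digit[OF w, of k]
  have "amin \<le> a (fst (w k)) (snd (w k))" "a (fst (w k)) (snd (w k)) \<le> b (fst (w k))"
    "b (fst (w k)) < 1"
    using amin_le_a[OF dig] digit_ab[OF dig] by auto
  then show "amin \<le> hscale a w k" "hscale a w k \<le> 1" "amin \<le> vscale b w k" "vscale b w k \<le> 1"
    unfolding hscale_def vscale_def by linarith+
qed

definition xcoord :: "(nat \<Rightarrow> nat \<times> nat) \<Rightarrow> real" where
  "xcoord w = expansion (hscale a w) (hshift c w)"

definition ycoord :: "(nat \<Rightarrow> nat \<times> nat) \<Rightarrow> real" where
  "ycoord w = expansion (vscale b w) (vshift d w)"

lemma coding_eq:
  assumes w: "w \<in> SigmaD p m"
  shows "coding a b c d w = (xcoord w, ycoord w)"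
  unfolding coding_def
proof (rule the_equality)
  note admX = admissible_horizontal[OF w] and admY = admissible_vertical[OF w]
  show "(xcoord w, ycoord w) \<in> (\<Inter>n. Scomp a b c d w n ` unit_square)"
  proof (intro InterI, clarify)
    fix n
    let ?u = "(tail_expansion (hscale a w) (hshift c w) n, tail_expansion (vscale b w) (vshift d w) n)"
    have "?u \<in> unit_square"
      unfolding unit_square_def using tail_unit_interval[OF admX] tail_unit_interval[OF admY] by auto
    moreover have "(xcoord w, ycoord w) = Scomp a b c d w n ?u"
      unfolding Scomp_formula xcoord_def ycoord_def
      using expansion_split[OF admX, of n] expansion_split[OF admY, of n] by (simp add: algebra_simps)
    ultimately show "(xcoord w, ycoord w) \<in> Scomp a b c d w n ` unit_square" by blast
  qed
  fix z assume z: "z \<in> (\<Inter>n. Scomp a b c d w n ` unit_square)"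
  have close: "\<bar>fst z - xcoord w\<bar> \<le> \<sigma> ^ n \<and> \<bar>snd z - ycoord w\<bar> \<le> \<sigma> ^ n" for n
  proof -
    obtain u where u: "u \<in> unit_square" "z = Scomp a b c d w n u" using z by blast
    then have "0 \<le> fst u" "fst u \<le> 1" "0 \<le> snd u" "snd u \<le> 1" by (auto simp: unit_square_def)
    then show ?thesis
      using expansion_level_approx[OF admX, of "fst u" n] expansion_level_approx[OF admY, of "snd u" n]
      unfolding u(2) Scomp_formula xcoord_def ycoord_def by simp
  qed
  have lim: "(\<lambda>n. \<sigma> ^ n) \<longlonglongrightarrow> 0" using sigma_bounds by (intro LIMSEQ_power_zero) auto
  have "\<bar>fst z - xcoord w\<bar> \<le> 0" using close by (intro LIMSEQ_le_const[OF lim]) blast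
  moreover have "\<bar>snd z - ycoord w\<bar> \<le> 0" using close by (intro LIMSEQ_le_const[OF lim]) blast
  ultimately show "z = (xcoord w, ycoord w)" by (simp add: prod_eq_iff)
qed

end

section \<open>Approximate squares are contained in balls\<close>

context lg_system
begin

lemma aprod_eq: "aprod a w l = (\<Prod>j<l. hscale a w j)"
  by (simp add: aprod_def hscale_def)

lemma bprod_eq: "bprod b w l = (\<Prod>j<l. vscale b w j)"
  by (simp add: bprod_def vscale_def)

lemma bprod_bounds:
  assumes "w \<in> SigmaD p m"
  shows "0 < bprod b w n" "bprod b w n \<le> \<sigma> ^ n" "bprod b w n \<le> 1"
  unfolding bprod_eq using cylinder_length[OF admissible_vertical[OF assms]] by auto

lemma bprod_tendsto_0:
  assumes w: "w \<in> SigmaD p m"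
  shows "(\<lambda>n. bprod b w n) \<longlonglongrightarrow> 0"
proof (rule Lim_null_comparison)
  show "eventually (\<lambda>n. norm (bprod b w n) \<le> \<sigma> ^ n) sequentially"
    using bprod_bounds[OF w] by (simp add: less_imp_le)
  show "(\<lambda>n. \<sigma> ^ n) \<longlonglongrightarrow> 0" using sigma_bounds by (intro LIMSEQ_power_zero) auto
qed

lemma bprod_lt1:
  assumes w: "w \<in> SigmaD p m" and n: "1 \<le> n"
  shows "bprod b w n < 1"
proof -
  have "\<sigma> ^ n \<le> \<sigma> ^ 1" using n sigma_bounds by (intro power_decreasing) auto
  then show ?thesis using bprod_bounds(2)[OF w, of n] sigma_bounds by simp
qed

lemma Lfun_props:
  assumes w: "w \<in> SigmaD p m"
  shows "1 \<le> Lfun a b n w" "aprod a w (Lfun a b n w) \<le> bprod b w n"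
    "\<And>l. 1 \<le> l \<Longrightarrow> l < Lfun a b n w \<Longrightarrow> bprod b w n < aprod a w l"
    "1 \<le> n \<Longrightarrow> Lfun a b n w \<le> n"
proof -
  have a_le_b: "aprod a w k \<le> bprod b w k" for k
    unfolding aprod_def bprod_def using digit_ab[OF symbol_digit[OF w]]
    by (intro prod_mono) (auto simp: less_imp_le)
  have "aprod a w (Suc n) \<le> aprod a w n"
    using scale_bounds(2)[OF w, of n] cylinder_length(1)[OF admissible_horizontal[OF w], of n]
    unfolding aprod_eq by (simp add: mult_left_le)
  then have ex: "\<exists>l. 1 \<le> l \<and> aprod a w l \<le> bprod b w n"
    using a_le_b[of n] by (intro exI[of _ "Suc n"]) auto
  show "1 \<le> Lfun a b n w" "aprod a w (Lfun a b n w) \<le> bprod b w n"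
    using LeastI_ex[OF ex] unfolding Lfun_def by auto
  show "bprod b w n < aprod a w l" if "1 \<le> l" "l < Lfun a b n w" for l
    using not_less_Least[of l "\<lambda>l. 1 \<le> l \<and> aprod a w l \<le> bprod b w n"] that
    unfolding Lfun_def by auto
  show "Lfun a b n w \<le> n" if "1 \<le> n"
    unfolding Lfun_def using that a_le_b[of n] by (intro Least_le) auto
qed

text \<open>\<open>L\<^sub>n\<close> is the first level whose horizontal length drops below \<open>\<beta>\<^sub>n\<close>, so that length
  is still at least \<open>amin \<beta>\<^sub>n\<close>.\<close>
lemma Lfun_lower:
  assumes w: "w \<in> SigmaD p m"
  shows "amin * bprod b w n \<le> aprod a w (Lfun a b n w)"
proof (cases "Lfun a b n w = 1")
  case True
  have "amin * bprod b w n \<le> amin"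
    using bprod_bounds[OF w] amin_bounds by (simp add: mult_left_le)
  also have "\<dots> \<le> aprod a w 1" using scale_bounds(1)[OF w, of 0] by (simp add: aprod_eq)
  finally show ?thesis using True by simp
next
  case False
  define L where "L = Lfun a b n w"
  then have L: "2 \<le> L" using Lfun_props(1)[OF w, of n] False by simp
  have "bprod b w n < aprod a w (L - 1)" using Lfun_props(3)[OF w, of "L - 1" n] L L_def by simp
  then have "bprod b w n * amin \<le> aprod a w (L - 1) * hscale a w (L - 1)"
    using scale_bounds(1)[OF w, of "L - 1"] amin_bounds bprod_bounds(1)[OF w, of n]
    by (intro mult_mono) auto
  then have "amin * bprod b w n \<le> aprod a w (L - 1) * hscale a w (L - 1)"
    by (simp add: mult.commute)
  also have "\<dots> = aprod a w L" using L by (cases L) (simp_all add: aprod_eq)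
  finally show ?thesis by (simp add: L_def)
qed

text \<open>The projection of \<open>B\<^sub>n(w)\<close> lies in the ball of radius \<open>2\<beta>\<^sub>n\<close> around \<open>\<Pi>(w)\<close>: both
  coordinates are determined up to \<open>\<beta>\<^sub>n\<close> by the common digits.\<close>
lemma approx_square_in_ball:
  assumes w: "w \<in> SigmaD p m" and w': "w' \<in> approx_square p m a b n w"
  shows "dist (coding a b c d w') (coding a b c d w) \<le> 2 * bprod b w n"
proof -
  define L where "L = Lfun a b n w"
  have w'S: "w' \<in> SigmaD p m" and agL: "\<forall>k<L. w' k = w k"
    and agn: "\<forall>k. L \<le> k \<and> k < n \<longrightarrow> fst (w' k) = fst (w k)"
    using w' unfolding approx_square_def L_def by auto
  have "\<forall>j<L. hscale a w j = hscale a w' j \<and> hshift c w j = hshift c w' j"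
    using agL by (simp add: hscale_def hshift_def)
  from expansion_common_prefix(2)[OF admissible_horizontal[OF w] admissible_horizontal[OF w'S] this]
  have dX: "\<bar>xcoord w' - xcoord w\<bar> \<le> bprod b w n"
    using Lfun_props(2)[OF w, of n] unfolding xcoord_def aprod_eq L_def by linarith
  have "fst (w' j) = fst (w j)" if "j < n" for j using agL agn that by (cases "j < L") auto
  then have "\<forall>j<n. vscale b w j = vscale b w' j \<and> vshift d w j = vshift d w' j"
    by (simp add: vscale_def vshift_def)
  then have dY: "\<bar>ycoord w' - ycoord w\<bar> \<le> bprod b w n"
    using expansion_common_prefix(2)[OF admissible_vertical[OF w] admissible_vertical[OF w'S]]
    unfolding ycoord_def bprod_eq by blast
  have "dist (xcoord w', ycoord w') (xcoord w, ycoord w) \<le> dist (xcoord w') (xcoord w) + dist (ycoord w') (ycoord w)"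
    unfolding dist_Pair_Pair by (rule order.trans[OF sqrt_sum_squares_le_sum_abs]) simp
  then show ?thesis
    unfolding coding_eq[OF w] coding_eq[OF w'S] dist_real_def using dX dY by linarith
qed

end

section \<open>Measurability\<close>

lemma coordinate_measurable: "(\<lambda>w::nat \<Rightarrow> nat \<times> nat. w k) \<in> measurable borel borel"
  by (rule borel_measurable_continuous_onI) simp

lemma coordinate_function_measurable: "(\<lambda>w::nat \<Rightarrow> nat \<times> nat. h (w k) :: real) \<in> borel_measurable borel"
proof -
  have "h \<in> borel_measurable (borel :: (nat \<times> nat) measure)"
    by (simp add: measurable_def sets_borel_eq_count_space space_borel)
  with coordinate_measurable show ?thesis by (rule measurable_compose)
qed

lemma coordinate_event_borel: "{w::nat \<Rightarrow> nat \<times> nat. P (w k)} \<in> sets borel"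
proof -
  have "{x::nat \<times> nat. P x} \<in> sets borel" by (simp add: sets_borel_eq_count_space)
  moreover have "(\<lambda>w::nat \<Rightarrow> nat \<times> nat. w k) -` {x. P x} \<inter> space borel = {w. P (w k)}"
    by (auto simp: space_borel)
  ultimately show ?thesis using measurable_sets[OF coordinate_measurable[of k]] by metis
qed

lemma cylinder_event_borel: "{w::nat \<Rightarrow> nat \<times> nat. \<forall>k<N. Q k (w k)} \<in> sets borel"
proof (induction N)
  case 0
  have "{w::nat \<Rightarrow> nat \<times> nat. \<forall>k<0. Q k (w k)} = space borel" by (simp add: space_borel)
  then show ?case by (simp only: sets.top)
next
  case (Suc N)
  have "{w::nat \<Rightarrow> nat \<times> nat. \<forall>k<Suc N. Q k (w k)} = {w. \<forall>k<N. Q k (w k)} \<inter> {w. Q N (w N)}"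
    by (auto simp: less_Suc_eq)
  then show ?case by (simp only: sets.Int[OF Suc coordinate_event_borel])
qed

locale lg_measure = lg_system +
  fixes \<mu> :: "(nat \<Rightarrow> nat \<times> nat) measure"
  assumes sets_mu: "sets \<mu> = sets (restrict_space borel (SigmaD p m))"
    and finite_mu: "finite_measure \<mu>"
begin

lemma space_mu: "space \<mu> = SigmaD p m"
  using sets_eq_imp_space_eq[OF sets_mu] by (simp add: space_restrict_space space_borel)

lemma coding_measurable: "coding a b c d \<in> measurable \<mu> borel"
proof -
  have "xcoord \<in> borel_measurable borel"
    unfolding xcoord_def[abs_def] expansion_def hscale_def hshift_def
    by (intro borel_measurable_suminf borel_measurable_times borel_measurable_prod coordinate_function_measurable)
  moreover have "ycoord \<in> borel_measurable borel"
    using coordinate_function_measurable[of "\<lambda>v. b (fst v)"] coordinate_function_measurable[of "\<lambda>v. d (fst v)"]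
    unfolding ycoord_def[abs_def] expansion_def vscale_def vshift_def
    by (intro borel_measurable_suminf borel_measurable_times borel_measurable_prod) simp_all
  ultimately have "(\<lambda>w. (xcoord w, ycoord w)) \<in> measurable (restrict_space borel (SigmaD p m)) borel"
    by (intro measurable_restrict_space1 borel_measurable_Pair)
  moreover have "measurable \<mu> borel = measurable (restrict_space borel (SigmaD p m)) borel"
    by (rule measurable_cong_sets[OF sets_mu refl])
  ultimately have "(\<lambda>w. (xcoord w, ycoord w)) \<in> measurable \<mu> borel" by metis
  then show ?thesis
    by (rule measurable_cong[THEN iffD2, rotated]) (simp add: coding_eq space_mu)
qed

lemma approx_square_sets: "approx_square p m a b n w \<in> sets \<mu>"
proof -
  define L where "L = Lfun a b n w"
  have eq: "approx_square p m a b n w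
      = SigmaD p m \<inter> ({w'. \<forall>k<L. w' k = w k} \<inter> {w'. \<forall>k<n. fst (w' k) = fst (w k)})"
  proof (intro set_eqI iffI)
    fix w' assume "w' \<in> approx_square p m a b n w"
    then have "w' \<in> SigmaD p m" "\<forall>k<L. w' k = w k" "\<forall>k. L \<le> k \<and> k < n \<longrightarrow> fst (w' k) = fst (w k)"
      unfolding approx_square_def L_def by auto
    moreover have "fst (w' k) = fst (w k)" if "k < n" for k
      using calculation that by (cases "k < L") auto
    ultimately show "w' \<in> SigmaD p m \<inter> ({w'. \<forall>k<L. w' k = w k} \<inter> {w'. \<forall>k<n. fst (w' k) = fst (w k)})"
      by blast
  qed (auto simp: approx_square_def L_def)
  have "{w'. \<forall>k<L. w' k = w k} \<inter> {w'. \<forall>k<n. fst (w' k) = fst (w k)} \<in> sets borel"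
    by (intro sets.Int cylinder_event_borel)
  then show ?thesis unfolding sets_mu sets_restrict_space eq by (rule imageI)
qed

lemma measure_distr_coding:
  assumes "A \<in> sets borel"
  shows "measure (distr \<mu> borel (coding a b c d)) A = measure \<mu> (coding a b c d -` A \<inter> SigmaD p m)"
  using measure_distr[OF coding_measurable assms] space_mu by simp

text \<open>Monotonicity of \<open>measure\<close> for an arbitrary subset of a measurable set
  (non-measurable sets have measure \<open>0\<close>).\<close>
lemma measure_le_of_subset: "A \<in> sets \<mu> \<Longrightarrow> B \<subseteq> A \<Longrightarrow> measure \<mu> B \<le> measure \<mu> A"
proof -
  interpret finite_measure \<mu> by (rule finite_mu)
  assume "A \<in> sets \<mu>" "B \<subseteq> A"
  then show ?thesis
    by (cases "B \<in> sets \<mu>") (auto simp: measure_notin_sets intro!: finite_measure_mono)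
qed

lemma approx_square_le_ball:
  assumes w: "w \<in> SigmaD p m"
  shows "measure \<mu> (approx_square p m a b n w)
     \<le> measure (distr \<mu> borel (coding a b c d)) (cball (coding a b c d w) (2 * bprod b w n))"
proof -
  let ?B = "cball (coding a b c d w) (2 * bprod b w n)"
  have B: "?B \<in> sets borel" by (rule borel_closed) simp
  have "approx_square p m a b n w \<subseteq> coding a b c d -` ?B \<inter> SigmaD p m"
  proof
    fix w' assume w': "w' \<in> approx_square p m a b n w"
    then have "w' \<in> SigmaD p m" by (simp add: approx_square_def)
    moreover have "dist (coding a b c d w) (coding a b c d w') \<le> 2 * bprod b w n"
      using approx_square_in_ball[OF w w'] by (simp add: dist_commute)
    ultimately show "w' \<in> coding a b c d -` ?B \<inter> SigmaD p m" by simp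
  qed
  moreover have "coding a b c d -` ?B \<inter> SigmaD p m \<in> sets \<mu>"
    using measurable_sets[OF coding_measurable B] space_mu by simp
  ultimately have "measure \<mu> (approx_square p m a b n w) \<le> measure \<mu> (coding a b c d -` ?B \<inter> SigmaD p m)"
    by (intro measure_le_of_subset)
  then show ?thesis unfolding measure_distr_coding[OF B] .
qed

end

section \<open>Two-dimensional systems: points that are close lie in the same approximate square\<close>

lemma first_difference:
  fixes P :: "nat \<Rightarrow> bool"
  assumes "\<not> (\<forall>k<n. P k)"
  obtains k where "k < n" "\<not> P k" "\<forall>j<k. P j"
proof -
  obtain k0 where "k0 < n" "\<not> P k0" using assms by blast
  with ex_least_nat_le[of "\<lambda>k. \<not> P k" k0] show ?thesis
    using that by (metis le_less_trans)
qed

context lg_system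
begin

definition recurs_within :: "(nat \<Rightarrow> nat \<times> nat) \<Rightarrow> nat \<Rightarrow> nat \<Rightarrow> bool" where
  "recurs_within w n M \<longleftrightarrow> (\<forall>j\<le>n. \<forall>dd\<in>digits p m. \<exists>k. j \<le> k \<and> k < j + M \<and> w k = dd)"

lemma recurs_withinE:
  assumes "recurs_within w n M" "j \<le> n" "dd \<in> digits p m"
  obtains k where "j \<le> k" "k < j + M" "w k = dd"
  using assms unfolding recurs_within_def by blast

end

locale lg_two_dim = lg_system +
  assumes two_dim: "two_dimensional p m"
begin

lemma two_rows: "2 \<le> p"
proof -
  obtain i3 j3 i4 j4 where "(i3, j3) \<in> digits p m" "(i4, j4) \<in> digits p m" "i3 \<noteq> i4"
    using two_dim unfolding two_dimensional_def by blast
  then show ?thesis by (auto simp: digits_def)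
qed

lemma ex_wide_row: "\<exists>i. i \<in> {1..p} \<and> 2 \<le> m i"
proof -
  obtain i1 j1 i2 j2 where "(i1, j1) \<in> digits p m" "(i2, j2) \<in> digits p m" "i1 = i2" "j1 \<noteq> j2"
    using two_dim unfolding two_dimensional_def by blast
  then show ?thesis by (auto simp: digits_def)
qed

definition i0 :: nat where "i0 = (SOME i. i \<in> {1..p} \<and> 2 \<le> m i)"

lemma i0: "i0 \<in> {1..p}" "2 \<le> m i0"
  using someI_ex[OF ex_wide_row] unfolding i0_def by auto

lemma corner_digits: "(1, 1) \<in> digits p m" "(p, 1) \<in> digits p m"
  "(i0, 1) \<in> digits p m" "(i0, m i0) \<in> digits p m"
  using row_digit[of 1] row_digit[of p] two_rows i0 by (auto simp: digits_def)

text \<open>\<open>\<kappa>\<close> measures how far the bottom/top rows and the first/last maps of row \<open>i0\<close>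
  stay away from the opposite sides of the unit square.\<close>
definition \<kappa> :: real where
  "\<kappa> = min (min (1 - d p) (b 1)) (min (1 - c i0 (m i0)) (c i0 1 + a i0 1))"

lemma kappa_facts:
  "0 < \<kappa>" "\<kappa> \<le> 1" "\<kappa> \<le> d p" "d 1 + b 1 \<le> 1 - \<kappa>"
  "\<kappa> \<le> c i0 (m i0)" "c i0 1 + a i0 1 \<le> 1 - \<kappa>"
proof -
  have rows: "d 1 + b 1 \<le> d p" using d_gap[of 1 p] two_rows by auto
  have cols: "c i0 1 + a i0 1 \<le> c i0 (m i0)" using c_gap[of i0 1 "m i0"] i0 by auto
  have pos: "0 < 1 - d p" "0 < b 1" "0 < 1 - c i0 (m i0)" "0 < c i0 1 + a i0 1"
    using LG_facts(6) b_bounds[of 1] c_last_lt1[OF i0(1)] c_nonneg[OF corner_digits(3)]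
      digit_ab[OF corner_digits(3)] two_rows by auto
  then show "0 < \<kappa>" unfolding \<kappa>_def by simp
  show "\<kappa> \<le> 1" unfolding \<kappa>_def using d_nonneg[of p] two_rows by auto
  show "\<kappa> \<le> d p" "d 1 + b 1 \<le> 1 - \<kappa>"
    unfolding \<kappa>_def using rows d_nonneg[of 1] two_rows by auto
  show "\<kappa> \<le> c i0 (m i0)" "c i0 1 + a i0 1 \<le> 1 - \<kappa>"
    unfolding \<kappa>_def using cols by auto
qed

text \<open>If the \<open>y\<close>-coordinates are very close, the rows agree up to level \<open>n\<close>: otherwise the
  first differing row separates the points, and the recurrence of the bottom and top rows
  keeps \<open>\<Pi>(w)\<close> away from the separating horizontal line.\<close>
lemma rows_agree:
  assumes w: "w \<in> SigmaD p m" and w': "w' \<in> SigmaD p m" and rec: "recurs_within w n M"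
    and close: "\<bar>ycoord w' - ycoord w\<bar> < \<kappa> * amin ^ M * bprod b w n"
  shows "\<forall>k<n. fst (w' k) = fst (w k)"
proof (rule ccontr)
  assume "\<not> (\<forall>k<n. fst (w' k) = fst (w k))"
  then obtain k where k: "k < n" "fst (w' k) \<noteq> fst (w k)" and before: "\<forall>j<k. fst (w' j) = fst (w j)"
    by (rule first_difference)
  have agree: "\<forall>j<k. vscale b w j = vscale b w' j \<and> vshift d w j = vshift d w' j"
    using before by (simp add: vscale_def vshift_def)
  have "fst (w k) < fst (w' k) \<or> fst (w' k) < fst (w k)" using k(2) by arith
  then have disjoint: "vshift d w k + vscale b w k \<le> vshift d w' k \<or> vshift d w' k + vscale b w' k \<le> vshift d w k"
    using d_gap symbol_row[OF w, of k] symbol_row[OF w', of k] unfolding vshift_def vscale_def by force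
  obtain N1 where N1: "Suc k \<le> N1" "N1 < Suc k + M" "w N1 = (p, 1)"
    by (rule recurs_withinE[OF rec Suc_leI[OF k(1)] corner_digits(2)])
  obtain N2 where N2: "Suc k \<le> N2" "N2 < Suc k + M" "w N2 = (1, 1)"
    by (rule recurs_withinE[OF rec Suc_leI[OF k(1)] corner_digits(1)])
  have "\<kappa> * amin ^ M * bprod b w n \<le> \<bar>ycoord w' - ycoord w\<bar>"
    unfolding ycoord_def bprod_eq
    by (rule expansion_first_difference[OF admissible_vertical[OF w] admissible_vertical[OF w'] agree disjoint, where Nl=N1 and Nr=N2])
      (use N1 N2 k kappa_facts scale_bounds(3)[OF w] amin_bounds in \<open>auto simp: vshift_def vscale_def\<close>)
  with close show False by linarith
qed

text \<open>Once the rows agree, very close \<open>x\<close>-coordinates force the full digits to agree up to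
  level \<open>L\<^sub>n\<close>, by the same argument with the first and last maps of row \<open>i0\<close>.\<close>
lemma columns_agree:
  assumes w: "w \<in> SigmaD p m" and w': "w' \<in> SigmaD p m" and rec: "recurs_within w n M"
    and rows: "\<forall>k<n. fst (w' k) = fst (w k)" and n: "1 \<le> n"
    and close: "\<bar>xcoord w' - xcoord w\<bar> < \<kappa> * amin ^ Suc M * bprod b w n"
  shows "\<forall>k<Lfun a b n w. w' k = w k"
proof (rule ccontr)
  define L where "L = Lfun a b n w"
  have Ln: "L \<le> n" using Lfun_props(4)[OF w n] L_def by simp
  assume "\<not> (\<forall>k<Lfun a b n w. w' k = w k)"
  then obtain k where k: "k < L" "w' k \<noteq> w k" and before: "\<forall>j<k. w' j = w j"
    unfolding L_def[symmetric] by (rule first_difference)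
  have agree: "\<forall>j<k. hscale a w j = hscale a w' j \<and> hshift c w j = hshift c w' j"
    using before by (simp add: hscale_def hshift_def)
  define i where "i = fst (w k)"
  have row: "fst (w' k) = i" using rows k(1) Ln unfolding i_def by simp
  then have cols: "snd (w k) \<noteq> snd (w' k)" using k(2) unfolding i_def by (auto simp: prod_eq_iff)
  have dig: "(i, snd (w k)) \<in> digits p m" "(i, snd (w' k)) \<in> digits p m"
    using symbol_digit[OF w, of k] symbol_digit[OF w', of k] row unfolding i_def by auto
  have "snd (w k) < snd (w' k) \<or> snd (w' k) < snd (w k)" using cols by arith
  then have disjoint: "hshift c w k + hscale a w k \<le> hshift c w' k \<or> hshift c w' k + hscale a w' k \<le> hshift c w k"
    using c_gap[of i] dig row unfolding hshift_def hscale_def i_def by (force simp: digits_def)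
  obtain N1 where N1: "Suc k \<le> N1" "N1 < Suc k + M" "w N1 = (i0, m i0)"
    by (rule recurs_withinE[OF rec Suc_leI[OF less_le_trans[OF k(1) Ln]] corner_digits(4)])
  obtain N2 where N2: "Suc k \<le> N2" "N2 < Suc k + M" "w N2 = (i0, 1)"
    by (rule recurs_withinE[OF rec Suc_leI[OF less_le_trans[OF k(1) Ln]] corner_digits(3)])
  have "\<kappa> * amin ^ M * aprod a w L \<le> \<bar>xcoord w' - xcoord w\<bar>"
    unfolding xcoord_def aprod_eq
    by (rule expansion_first_difference[OF admissible_horizontal[OF w] admissible_horizontal[OF w'] agree disjoint, where Nl=N1 and Nr=N2])
      (use N1 N2 k kappa_facts scale_bounds(1)[OF w] amin_bounds in \<open>auto simp: hshift_def hscale_def\<close>)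
  moreover have "\<kappa> * amin ^ Suc M * bprod b w n \<le> \<kappa> * amin ^ M * aprod a w L"
    using Lfun_lower[OF w, of n] kappa_facts(1) amin_bounds unfolding L_def
    by (simp add: mult_left_mono mult.assoc)
  ultimately show False using close by linarith
qed

lemma close_implies_approx_square:
  assumes w: "w \<in> SigmaD p m" and w': "w' \<in> SigmaD p m" and rec: "recurs_within w n M"
    and n: "1 \<le> n"
    and close: "dist (coding a b c d w') (coding a b c d w) < \<kappa> * amin ^ Suc M * bprod b w n"
  shows "w' \<in> approx_square p m a b n w"
proof -
  have dX: "\<bar>xcoord w' - xcoord w\<bar> < \<kappa> * amin ^ Suc M * bprod b w n"
    using dist_fst_le[of "coding a b c d w'" "coding a b c d w"] close
    unfolding coding_eq[OF w] coding_eq[OF w'] by (simp add: dist_real_def)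
  have "\<kappa> * amin ^ Suc M * bprod b w n \<le> \<kappa> * amin ^ M * bprod b w n"
    using kappa_facts(1) amin_bounds bprod_bounds(1)[OF w, of n]
    by (intro mult_right_mono mult_left_mono power_decreasing) auto
  then have dY: "\<bar>ycoord w' - ycoord w\<bar> < \<kappa> * amin ^ M * bprod b w n"
    using dist_snd_le[of "coding a b c d w'" "coding a b c d w"] close
    unfolding coding_eq[OF w] coding_eq[OF w'] by (simp add: dist_real_def)
  have rows: "\<forall>k<n. fst (w' k) = fst (w k)" by (rule rows_agree[OF w w' rec dY])
  have "\<forall>k<Lfun a b n w. w' k = w k" by (rule columns_agree[OF w w' rec rows n dX])
  then show ?thesis unfolding approx_square_def using w' rows by auto
qed

end

section \<open>Lower limits in the extended reals\<close>

lemma Liminf_le_compose: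
  fixes f :: "'a \<Rightarrow> 'c :: complete_linorder"
  assumes "filterlim N F G"
  shows "Liminf F f \<le> Liminf G (\<lambda>x. f (N x))"
  unfolding le_Liminf_iff
proof (intro allI impI)
  fix y assume "y < Liminf F f"
  then have "eventually (\<lambda>z. y < f z) F" by (rule less_LiminfD)
  then show "eventually (\<lambda>x. y < f (N x)) G" using assms unfolding filterlim_iff by blast
qed

lemma Liminf_mult_tendsto_one:
  fixes u :: "'a \<Rightarrow> ereal" and q :: "'a \<Rightarrow> real"
  assumes q: "(q \<longlongrightarrow> 1) F"
  shows "Liminf F u \<le> Liminf F (\<lambda>x. u x * ereal (q x))"
  unfolding le_Liminf_iff
proof (intro allI impI)
  fix y assume "y < Liminf F u"
  then obtain t where t: "y < ereal t" "ereal t < Liminf F u" using ereal_dense2 by blast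
  have "eventually (\<lambda>x. ereal t < u x) F" using t(2) by (rule less_LiminfD)
  moreover have "((\<lambda>x. ereal (t * q x)) \<longlongrightarrow> ereal t) F"
    using tendsto_mult_left[OF q, of t] by simp
  then have "eventually (\<lambda>x. y < ereal (t * q x)) F" using t(1) by (rule order_tendstoD(1))
  moreover have "eventually (\<lambda>x. 0 < q x) F" using q by (rule order_tendstoD(1)) simp
  ultimately show "eventually (\<lambda>x. y < u x * ereal (q x)) F"
  proof eventually_elim
    case (elim x)
    have "ereal (t * q x) = ereal t * ereal (q x)" by simp
    also have "\<dots> \<le> u x * ereal (q x)" using elim by (intro ereal_mult_right_mono) auto
    finally show ?case using elim by simp
  qed
qed

lemma ereal_divide_neg_antimono:
  assumes "y < 0" "e1 \<le> e2"
  shows "e2 / ereal y \<le> e1 / ereal y"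
proof -
  have "- ereal (1 / y) \<ge> 0" using assms(1) by simp
  then have "e1 * - ereal (1 / y) \<le> e2 * - ereal (1 / y)"
    using assms(2) by (intro ereal_mult_right_mono)
  then have "e2 * ereal (1 / y) \<le> e1 * ereal (1 / y)"
    by (simp only: ereal_mult_minus_right ereal_minus_le_minus)
  moreover have "inverse (ereal y) = ereal (1 / y)" using assms(1) by (simp add: inverse_eq_divide)
  ultimately show ?thesis unfolding divide_ereal_def by simp
qed

lemma ereal_divide_rescale:
  assumes "x \<noteq> 0" "y \<noteq> 0"
  shows "e / ereal x * ereal (x / y) = e / ereal y"
proof -
  have "e / ereal x * ereal (x / y) = e * (ereal (1 / x) * ereal (x / y))"
    unfolding divide_ereal_def using assms by (simp add: mult.assoc)
  also have "ereal (1 / x) * ereal (x / y) = ereal (1 / y)" using assms by simp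
  finally show ?thesis unfolding divide_ereal_def using assms by (simp add: inverse_eq_divide)
qed

lemma elog_mono: "0 \<le> s \<Longrightarrow> s \<le> t \<Longrightarrow> elog s \<le> elog t"
  unfolding elog_def by auto

lemma log_ratio_compare:
  assumes "0 \<le> s" "s \<le> t" "0 < r" "r < 1" "0 < r'" "r' < 1"
  shows "elog t / ereal (ln r) * ereal (ln r / ln r') \<le> elog s / ereal (ln r')"
proof -
  have "elog t / ereal (ln r) * ereal (ln r / ln r') = elog t / ereal (ln r')"
    using assms by (intro ereal_divide_rescale) auto
  also have "\<dots> \<le> elog s / ereal (ln r')"
    using assms by (intro ereal_divide_neg_antimono elog_mono) auto
  finally show ?thesis .
qed

lemma Liminf_transfer:
  fixes u :: "'a \<Rightarrow> ereal" and v :: "'b \<Rightarrow> ereal"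
  assumes N: "filterlim N F G" and q: "(q \<longlongrightarrow> 1) G"
    and le: "eventually (\<lambda>x. u (N x) * ereal (q x) \<le> v x) G"
  shows "Liminf F u \<le> Liminf G v"
proof -
  have "Liminf F u \<le> Liminf G (\<lambda>x. u (N x))" by (rule Liminf_le_compose[OF N])
  also have "\<dots> \<le> Liminf G (\<lambda>x. u (N x) * ereal (q x))" by (rule Liminf_mult_tendsto_one[OF q])
  also have "\<dots> \<le> Liminf G v" using le by (rule Liminf_mono)
  finally show ?thesis .
qed

section \<open>Recurrence of digits\<close>

lemma running_max_sublinear:
  fixes f :: "nat \<Rightarrow> nat"
  assumes f: "(\<lambda>n. real (f n) / real n) \<longlonglongrightarrow> 0"
  shows "(\<lambda>n. real (Max (f ` {..n})) / real n) \<longlonglongrightarrow> 0"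
proof (rule order_tendstoI)
  fix y :: real assume "y < 0"
  then have "y < real (Max (f ` {..n})) / real n" for n by (rule less_le_trans) simp
  then show "eventually (\<lambda>n. y < real (Max (f ` {..n})) / real n) sequentially"
    by (simp add: always_eventually)
next
  fix \<epsilon> :: real assume \<epsilon>: "0 < \<epsilon>"
  then have "eventually (\<lambda>n. real (f n) / real n < \<epsilon> / 2) sequentially"
    by (intro order_tendstoD(2)[OF f]) simp
  then obtain J where J: "\<And>n. J \<le> n \<Longrightarrow> real (f n) / real n < \<epsilon> / 2"
    by (auto simp: eventually_sequentially)
  define C where "C = Max (f ` {..J})"
  have "eventually (\<lambda>n. real C / real n < \<epsilon> / 2) sequentially"
    using \<epsilon> by (intro order_tendstoD(2)[OF lim_const_over_n]) simp
  moreover have "eventually (\<lambda>n. J < n) sequentially" by (rule eventually_gt_at_top)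
  ultimately show "eventually (\<lambda>n. real (Max (f ` {..n})) / real n < \<epsilon>) sequentially"
  proof eventually_elim
    case (elim n)
    have "Max (f ` {..n}) \<in> f ` {..n}" by (intro Max_in) auto
    then obtain j where j: "j \<le> n" "Max (f ` {..n}) = f j" by (metis atMost_iff imageE)
    have "real (f j) / real n < \<epsilon> / 2"
    proof (cases "j \<le> J")
      case True
      then have "f j \<le> C" unfolding C_def by (intro Max_ge) auto
      then have "real (f j) / real n \<le> real C / real n" by (simp add: divide_right_mono)
      then show ?thesis using elim by linarith
    next
      case False
      then have "real (f j) / real n \<le> real (f j) / real j" using j by (simp add: frac_le)
      then show ?thesis using J[of j] False by linarith
    qed
    then show ?case unfolding j(2) using \<epsilon> by linarith
  qed
qed

context lg_system
begin

lemma Rd_window: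
  assumes "Rd j w dd = enat r"
  shows "\<exists>k. j \<le> k \<and> k < j + r \<and> w k = dd"
proof -
  have ex: "\<exists>k\<ge>j. w k = dd" using assms by (auto simp: Rd_def split: if_splits)
  define k where "k = (LEAST k. j \<le> k \<and> w k = dd)"
  have "j \<le> k" "w k = dd" using LeastI_ex[of "\<lambda>k. j \<le> k \<and> w k = dd"] ex unfolding k_def by auto
  moreover have "r = k + 1 - j" using assms ex unfolding Rd_def k_def by auto
  ultimately show ?thesis by auto
qed

lemma Rmax_window:
  assumes dd: "dd \<in> digits p m" and R: "Rmax p m j w = enat r"
  shows "\<exists>k. j \<le> k \<and> k < j + r \<and> w k = dd"
proof -
  have "Rd j w dd \<le> enat r" unfolding R[symmetric] Rmax_def using dd digits_finite by (intro Max_ge) auto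
  then obtain r' where "Rd j w dd = enat r'" "r' \<le> r" by (cases "Rd j w dd") auto
  then show ?thesis using Rd_window by fastforce
qed

lemma Rmax_finite_of_later:
  assumes fin: "Rmax p m n w \<noteq> \<infinity>" and j: "j \<le> n"
  shows "Rmax p m j w \<noteq> \<infinity>"
proof -
  obtain r where r: "Rmax p m n w = enat r" using fin by auto
  have "Rd j w dd \<noteq> \<infinity>" if dd: "dd \<in> digits p m" for dd
    using Rmax_window[OF dd r] j by (auto simp: Rd_def) (metis le_trans)
  moreover have "Rmax p m j w \<in> Rd j w ` digits p m"
    unfolding Rmax_def using digits_finite row_digit[of 1] LG_facts(1) by (intro Max_in) auto
  ultimately show ?thesis by auto
qed

text \<open>Under \<open>R\<^sub>n(w)/n \<rightarrow> 0\<close> every \<open>R\<^sub>j(w)\<close> is finite: some later \<open>R\<^sub>n(w)\<close> is.\<close>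
lemma Rmax_finite:
  assumes lim: "(\<lambda>n. ereal_of_enat (Rmax p m n w) / ereal (real n)) \<longlonglongrightarrow> 0"
  shows "Rmax p m j w \<noteq> \<infinity>"
proof -
  have "eventually (\<lambda>n. ereal_of_enat (Rmax p m n w) / ereal (real n) < 1) sequentially"
    using order_tendstoD(2)[OF lim] by simp
  then obtain n0 where n0: "\<And>n. n0 \<le> n \<Longrightarrow> ereal_of_enat (Rmax p m n w) / ereal (real n) < 1"
    by (auto simp: eventually_sequentially)
  define n where "n = max j (max n0 1)"
  have "Rmax p m n w \<noteq> \<infinity>"
  proof
    assume "Rmax p m n w = \<infinity>"
    then have "ereal_of_enat (Rmax p m n w) / ereal (real n) = \<infinity>"
      unfolding n_def by (simp add: divide_ereal_def)
    then show False using n0[of n] unfolding n_def by fastforce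
  qed
  then show ?thesis by (rule Rmax_finite_of_later) (simp add: n_def)
qed

lemma recurrence_window:
  assumes lim: "(\<lambda>n. ereal_of_enat (Rmax p m n w) / ereal (real n)) \<longlonglongrightarrow> 0"
  obtains M where "(\<lambda>n. real (M n) / real n) \<longlonglongrightarrow> 0" "\<And>n. recurs_within w n (M n)"
proof -
  define \<rho> where "\<rho> j = the_enat (Rmax p m j w)" for j
  have \<rho>: "Rmax p m j w = enat (\<rho> j)" for j
    using Rmax_finite[OF lim, of j] unfolding \<rho>_def by (cases "Rmax p m j w") auto
  have "eventually (\<lambda>n. ereal_of_enat (Rmax p m n w) / ereal (real n) = ereal (real (\<rho> n) / real n)) sequentially"
    using eventually_gt_at_top[of 0] by eventually_elim (simp add: \<rho>)
  from tendsto_cong[OF this] lim have "(\<lambda>n. real (\<rho> n) / real n) \<longlonglongrightarrow> 0"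
    by (simp add: zero_ereal_def)
  then have M_sublinear: "(\<lambda>n. real (Max (\<rho> ` {..n})) / real n) \<longlonglongrightarrow> 0"
    by (rule running_max_sublinear)
  have "recurs_within w n (Max (\<rho> ` {..n}))" for n
    unfolding recurs_within_def
  proof (intro allI impI ballI)
    fix j dd assume j: "j \<le> n" and dd: "dd \<in> digits p m"
    obtain k where k: "j \<le> k" "k < j + \<rho> j" "w k = dd" using Rmax_window[OF dd \<rho>] by blast
    have "\<rho> j \<le> Max (\<rho> ` {..n})" using j by (intro Max_ge) auto
    then show "\<exists>k. j \<le> k \<and> k < j + Max (\<rho> ` {..n}) \<and> w k = dd" using k by (intro exI[of _ k]) auto
  qed
  with M_sublinear show thesis by (rule that)
qed

end

section \<open>Part (ii): the upper bound\<close>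

context lg_measure
begin

lemma bprod_at_right_0:
  assumes w: "w \<in> SigmaD p m" and c0: "0 < c0"
  shows "filterlim (\<lambda>n. c0 * bprod b w n) (at_right 0) sequentially"
proof (rule tendsto_imp_filterlim_at_right)
  show "(\<lambda>n. c0 * bprod b w n) \<longlonglongrightarrow> 0"
    using tendsto_mult_right_zero[OF bprod_tendsto_0[OF w], of c0] by (simp add: mult.commute)
  show "eventually (\<lambda>n. 0 < c0 * bprod b w n) sequentially"
    using bprod_bounds(1)[OF w] c0 by simp
qed

lemma log_scale_ratio_tendsto:
  assumes w: "w \<in> SigmaD p m"
  shows "(\<lambda>n. ln (2 * bprod b w n) / ln (bprod b w n)) \<longlonglongrightarrow> 1"
proof -
  have "filterlim (\<lambda>n. ln (bprod b w n)) at_bot sequentially"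
    using filterlim_compose[OF ln_at_0 bprod_at_right_0[OF w, of 1]] by simp
  then have ln_inf: "filterlim (\<lambda>n. ln (bprod b w n)) at_infinity sequentially"
    using at_bot_le_at_infinity filterlim_mono by blast
  have "(\<lambda>n. 1 + ln 2 / ln (bprod b w n)) \<longlonglongrightarrow> 1 + 0"
    by (intro tendsto_add tendsto_const tendsto_divide_0[OF tendsto_const ln_inf])
  moreover have "eventually (\<lambda>n. 1 + ln 2 / ln (bprod b w n) = ln (2 * bprod b w n) / ln (bprod b w n)) sequentially"
    using eventually_gt_at_top[of 0]
  proof eventually_elim
    case (elim n)
    then have "ln (bprod b w n) < 0" using bprod_lt1[OF w, of n] bprod_bounds(1)[OF w, of n] by simp
    then show ?case using bprod_bounds(1)[OF w, of n] by (simp add: ln_mult field_simps)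
  qed
  ultimately show ?thesis by (simp add: tendsto_cong)
qed

text \<open>Part (ii): since \<open>\<Pi>(B\<^sub>n(w)) \<subseteq> B(\<Pi>(w), 2\<beta>\<^sub>n)\<close>, the local dimension along the radii
  \<open>2\<beta>\<^sub>n\<close> is bounded by that of the approximate squares.\<close>
lemma upper_bound:
  assumes w: "w \<in> SigmaD p m"
  shows "Liminf (at_right 0) (\<lambda>r. elog (measure (distr \<mu> borel (coding a b c d)) (cball (coding a b c d w) r)) / ereal (ln r))
      \<le> Liminf sequentially (\<lambda>n. elog (measure \<mu> (approx_square p m a b n w)) / ereal (ln (bprod b w n)))"
proof (rule Liminf_transfer[OF bprod_at_right_0[OF w] log_scale_ratio_tendsto[OF w]])
  have "eventually (\<lambda>n. bprod b w n < 1 / 2) sequentially"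
    by (rule order_tendstoD(2)[OF bprod_tendsto_0[OF w]]) simp
  then show "eventually (\<lambda>n.
      elog (measure (distr \<mu> borel (coding a b c d)) (cball (coding a b c d w) (2 * bprod b w n))) / ereal (ln (2 * bprod b w n))
        * ereal (ln (2 * bprod b w n) / ln (bprod b w n))
      \<le> elog (measure \<mu> (approx_square p m a b n w)) / ereal (ln (bprod b w n))) sequentially"
  proof eventually_elim
    case (elim n)
    then show ?case
      using approx_square_le_ball[OF w, of n] bprod_bounds(1)[OF w, of n]
      by (intro log_ratio_compare) auto
  qed
qed simp

end

section \<open>Part (i): the lower bound for two-dimensional systems\<close>

locale lg_recurrent = lg_measure + lg_two_dim +
  fixes w :: "nat \<Rightarrow> nat \<times> nat" and M :: "nat \<Rightarrow> nat"
  assumes w: "w \<in> SigmaD p m"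
    and M_sublinear: "(\<lambda>n. real (M n) / real n) \<longlonglongrightarrow> 0"
    and recurrent: "\<And>n. recurs_within w n (M n)"
begin

text \<open>\<open>radius n\<close> is the radius for which \<open>close_implies_approx_square\<close> applies at level \<open>n\<close>;
  \<open>level r\<close> is the largest level whose radius still exceeds \<open>r\<close>.\<close>
definition radius :: "nat \<Rightarrow> real" where
  "radius n = \<kappa> * amin ^ Suc (M n) * bprod b w n"

definition level :: "real \<Rightarrow> nat" where
  "level r = Max {n. 1 \<le> n \<and> r < radius n}"

lemma radius_bounds: "0 < radius n" "radius n \<le> bprod b w n"
proof -
  show "0 < radius n" unfolding radius_def using kappa_facts(1) amin_bounds bprod_bounds(1)[OF w] by simp
  have "amin ^ Suc (M n) \<le> 1" using amin_bounds by (intro power_le_one) auto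
  then have "\<kappa> * amin ^ Suc (M n) \<le> 1"
    using kappa_facts(1,2) amin_bounds by (meson less_imp_le mult_le_one zero_le_power)
  then show "radius n \<le> bprod b w n"
    unfolding radius_def using bprod_bounds(1)[OF w, of n] by (simp add: mult_left_le_one_le)
qed

text \<open>Only finitely many levels have radius above a given \<open>r > 0\<close>, so \<open>level r\<close> is
  well defined and tends to infinity as \<open>r \<rightarrow> 0\<close>.\<close>
lemma level_set_finite:
  assumes r: "0 < r"
  shows "finite {n. 1 \<le> n \<and> r < radius n}"
proof -
  have "eventually (\<lambda>n. \<sigma> ^ n < r) sequentially"
    using r sigma_bounds by (intro order_tendstoD(2)[OF LIMSEQ_power_zero]) auto
  then obtain K where K: "\<And>n. K \<le> n \<Longrightarrow> \<sigma> ^ n < r" by (auto simp: eventually_sequentially)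
  have "{n. 1 \<le> n \<and> r < radius n} \<subseteq> {..<K}"
  proof
    fix n assume "n \<in> {n. 1 \<le> n \<and> r < radius n}"
    then have "r < \<sigma> ^ n" using radius_bounds(2)[of n] bprod_bounds(2)[OF w, of n] by auto
    then show "n \<in> {..<K}" using K[of n] by force
  qed
  then show ?thesis by (rule finite_subset) simp
qed

lemma level_props:
  assumes r: "0 < r" "r < radius 1"
  shows "1 \<le> level r" "r < radius (level r)" "radius (Suc (level r)) \<le> r"
proof -
  have "level r \<in> {n. 1 \<le> n \<and> r < radius n}"
    unfolding level_def using level_set_finite[OF r(1)] r(2) by (intro Max_in) auto
  then show "1 \<le> level r" "r < radius (level r)" by auto
  have "Suc (level r) \<notin> {n. 1 \<le> n \<and> r < radius n}"
    using Max_ge[OF level_set_finite[OF r(1)], of "Suc (level r)"] unfolding level_def by auto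
  then show "radius (Suc (level r)) \<le> r" by auto
qed

lemma eventually_small_radius: "eventually (\<lambda>r. 0 < r \<and> r < radius K) (at_right 0)"
  unfolding eventually_at_right_field using radius_bounds(1)[of K] by blast

lemma level_tendsto: "filterlim level at_top (at_right 0)"
  unfolding filterlim_at_top
proof
  fix K
  show "eventually (\<lambda>r. K \<le> level r) (at_right 0)"
    using eventually_small_radius[of "max K 1"]
  proof eventually_elim
    case (elim r)
    then have "max K 1 \<le> level r"
      unfolding level_def using level_set_finite by (intro Max_ge) auto
    then show ?case by simp
  qed
qed

lemma ball_le_approx_square:
  assumes r: "0 < r" "r < radius 1"
  shows "measure (distr \<mu> borel (coding a b c d)) (cball (coding a b c d w) r)
     \<le> measure \<mu> (approx_square p m a b (level r) w)"
proof -
  let ?B = "cball (coding a b c d w) r"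
  have B: "?B \<in> sets borel" by (rule borel_closed) simp
  have "coding a b c d -` ?B \<inter> SigmaD p m \<subseteq> approx_square p m a b (level r) w"
  proof
    fix w' assume w': "w' \<in> coding a b c d -` ?B \<inter> SigmaD p m"
    then have "dist (coding a b c d w') (coding a b c d w) < radius (level r)"
      using level_props(2)[OF r] by (simp add: dist_commute)
    then show "w' \<in> approx_square p m a b (level r) w"
      using close_implies_approx_square[OF w _ recurrent level_props(1)[OF r]] w'
      unfolding radius_def by simp
  qed
  then show ?thesis unfolding measure_distr_coding[OF B] by (rule measure_le_of_subset[OF approx_square_sets])
qed

text \<open>The scales \<open>r\<close> and \<open>\<beta>\<^bsub>level r\<^esub>\<close> are logarithmically equivalent: their logarithms
  differ by at most \<open>defect (level r)\<close>, which is \<open>o(n)\<close> while \<open>|log \<beta>\<^sub>n| \<ge> n |log \<sigma>|\<close>.\<close>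
definition defect :: "nat \<Rightarrow> real" where
  "defect n = - ln \<kappa> - (real (M (Suc n)) + 2) * ln amin"

text \<open>Since \<open>r \<ge> radius (level r + 1)\<close>, \<open>log r\<close> is at most \<open>defect\<close> below \<open>log \<beta>\<close>.\<close>
lemma ln_radius_lower:
  assumes r: "0 < r" "r < radius 1"
  shows "ln (bprod b w (level r)) - defect (level r) \<le> ln r"
proof -
  define n where "n = level r"
  have "bprod b w n * amin \<le> bprod b w (Suc n)"
    using scale_bounds(3)[OF w, of n] bprod_bounds(1)[OF w, of n] unfolding bprod_eq
    by (simp add: mult_left_mono)
  then have "ln (bprod b w n * amin) \<le> ln (bprod b w (Suc n))"
    using amin_bounds bprod_bounds(1)[OF w] by simp
  then have "ln (bprod b w n) + ln amin \<le> ln (bprod b w (Suc n))"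
    using amin_bounds bprod_bounds(1)[OF w, of n] by (simp add: ln_mult)
  moreover have "ln (radius (Suc n)) = ln \<kappa> + real (Suc (M (Suc n))) * ln amin + ln (bprod b w (Suc n))"
    unfolding radius_def using kappa_facts(1) amin_bounds bprod_bounds(1)[OF w, of "Suc n"]
    by (simp add: ln_mult ln_realpow algebra_simps)
  moreover have "ln (radius (Suc n)) \<le> ln r"
    using level_props(3)[OF r] radius_bounds(1) r(1) n_def by simp
  ultimately show ?thesis unfolding defect_def n_def[symmetric] by (simp add: algebra_simps)
qed

lemma defect_sublinear: "(\<lambda>n. defect n / real n) \<longlonglongrightarrow> 0"
proof -
  have "(\<lambda>n. real (M (Suc n)) / real (Suc n) * (real (Suc n) / real n)) \<longlonglongrightarrow> 0 * 1"
    using LIMSEQ_Suc[OF M_sublinear] LIMSEQ_Suc_n_over_n by (intro tendsto_mult) simp_all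
  then have M_Suc: "(\<lambda>n. real (M (Suc n)) / real n) \<longlonglongrightarrow> 0"
    by (simp add: field_simps del: of_nat_Suc)
  have "defect n = (- ln \<kappa> - 2 * ln amin) + (- ln amin) * real (M (Suc n))" for n
    unfolding defect_def by (simp add: algebra_simps)
  then have "defect n / real n = (- ln \<kappa> - 2 * ln amin) / real n + (- ln amin) * (real (M (Suc n)) / real n)" for n
    by (simp add: add_divide_distrib diff_divide_distrib)
  moreover have "(\<lambda>n. (- ln \<kappa> - 2 * ln amin) / real n + (- ln amin) * (real (M (Suc n)) / real n)) \<longlonglongrightarrow> 0 + (- ln amin) * 0"
    by (intro tendsto_add tendsto_mult lim_const_over_n tendsto_const M_Suc)
  ultimately show ?thesis by simp
qed

lemma defect_over_log_tendsto: "(\<lambda>n. defect n / ln (bprod b w n)) \<longlonglongrightarrow> 0"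
proof (rule Lim_null_comparison)
  define lam where "lam = - ln \<sigma>"
  have \<sigma>: "0 < \<sigma>" using sigma_bounds(3)[of 1] b_bounds[of 1] LG_facts(1) by force
  then have lam: "0 < lam" unfolding lam_def using sigma_bounds(2) by simp
  show "(\<lambda>n. \<bar>defect n / real n\<bar> / lam) \<longlonglongrightarrow> 0"
    using tendsto_divide[OF tendsto_rabs_zero[OF defect_sublinear] tendsto_const, of lam] lam by simp
  show "eventually (\<lambda>n. norm (defect n / ln (bprod b w n)) \<le> \<bar>defect n / real n\<bar> / lam) sequentially"
    using eventually_gt_at_top[of 0]
  proof eventually_elim
    case (elim n)
    have "ln (bprod b w n) \<le> ln (\<sigma> ^ n)" using bprod_bounds(1,2)[OF w, of n] by simp
    then have "real n * lam \<le> \<bar>ln (bprod b w n)\<bar>" unfolding lam_def using \<sigma> by (simp add: ln_realpow)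
    moreover have "0 < real n * lam" using elim lam by simp
    ultimately have "\<bar>defect n\<bar> / \<bar>ln (bprod b w n)\<bar> \<le> \<bar>defect n\<bar> / (real n * lam)"
      by (intro divide_left_mono) auto
    then show ?case by (simp add: abs_divide)
  qed
qed

lemma scale_ratio_bounds:
  assumes r: "0 < r" "r < radius 1"
  defines "N \<equiv> level r"
  shows "ln (bprod b w N) / (ln (bprod b w N) - defect N) \<le> ln (bprod b w N) / ln r"
    and "ln (bprod b w N) / ln r \<le> 1"
proof -
  have lb: "ln (bprod b w N) < 0"
    using bprod_lt1[OF w level_props(1)[OF r]] bprod_bounds(1)[OF w] unfolding N_def by simp
  have "r < bprod b w N" using level_props(2)[OF r] radius_bounds(2) unfolding N_def by (meson less_le_trans)
  then have lr: "ln r < ln (bprod b w N)" using r(1) by simp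
  have low: "ln (bprod b w N) - defect N \<le> ln r" using ln_radius_lower[OF r] unfolding N_def .
  show "ln (bprod b w N) / (ln (bprod b w N) - defect N) \<le> ln (bprod b w N) / ln r"
    using lb lr low by (intro divide_left_mono_neg) (auto intro: mult_neg_neg)
  show "ln (bprod b w N) / ln r \<le> 1" using lb lr by (simp add: divide_le_eq)
qed

lemma scale_ratio_tendsto: "((\<lambda>r. ln (bprod b w (level r)) / ln r) \<longlongrightarrow> 1) (at_right 0)"
proof (rule tendsto_sandwich)
  define s where "s n = ln (bprod b w n) / (ln (bprod b w n) - defect n)" for n
  have "(\<lambda>n. 1 / (1 - defect n / ln (bprod b w n))) \<longlonglongrightarrow> 1 / (1 - 0)"
    by (intro tendsto_divide tendsto_diff tendsto_const defect_over_log_tendsto) simp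
  moreover have "eventually (\<lambda>n. 1 / (1 - defect n / ln (bprod b w n)) = s n) sequentially"
    using eventually_ge_at_top[of 1]
  proof eventually_elim
    case (elim n)
    then have "ln (bprod b w n) < 0" using bprod_lt1[OF w elim] bprod_bounds(1)[OF w, of n] by simp
    then show ?case unfolding s_def by (simp add: field_simps)
  qed
  ultimately have "s \<longlonglongrightarrow> 1" by (simp add: tendsto_cong)
  from filterlim_compose[OF this level_tendsto]
  show "((\<lambda>r. s (level r)) \<longlongrightarrow> 1) (at_right 0)" .
  show "((\<lambda>r. 1) \<longlongrightarrow> 1) (at_right 0)" by simp
  show "eventually (\<lambda>r. s (level r) \<le> ln (bprod b w (level r)) / ln r) (at_right 0)"
    using eventually_small_radius[of 1] by eventually_elim (use scale_ratio_bounds(1) in \<open>auto simp: s_def\<close>)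
  show "eventually (\<lambda>r. ln (bprod b w (level r)) / ln r \<le> 1) (at_right 0)"
    using eventually_small_radius[of 1] by eventually_elim (use scale_ratio_bounds(2) in auto)
qed

lemma lower_bound:
  "Liminf sequentially (\<lambda>n. elog (measure \<mu> (approx_square p m a b n w)) / ereal (ln (bprod b w n)))
   \<le> Liminf (at_right 0) (\<lambda>r. elog (measure (distr \<mu> borel (coding a b c d)) (cball (coding a b c d w) r)) / ereal (ln r))"
proof (rule Liminf_transfer[OF level_tendsto scale_ratio_tendsto])
  show "eventually (\<lambda>r. elog (measure \<mu> (approx_square p m a b (level r) w)) / ereal (ln (bprod b w (level r)))
      * ereal (ln (bprod b w (level r)) / ln r)
    \<le> elog (measure (distr \<mu> borel (coding a b c d)) (cball (coding a b c d w) r)) / ereal (ln r)) (at_right 0)"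
    using eventually_small_radius[of 1]
  proof eventually_elim
    case (elim r)
    have "r < bprod b w 1" using elim radius_bounds(2)[of 1] by linarith
    then have "r < 1" using bprod_lt1[OF w, of 1] by simp
    then show ?case
      using ball_le_approx_square[OF conjunct1[OF elim] conjunct2[OF elim]] elim
        bprod_bounds(1)[OF w] bprod_lt1[OF w level_props(1)[OF conjunct1[OF elim] conjunct2[OF elim]]]
      by (intro log_ratio_compare) auto
  qed
qed

end

theorem lemma2p1:
  fixes p :: nat and m :: "nat \<Rightarrow> nat"
    and a c :: "nat \<Rightarrow> nat \<Rightarrow> real" and b d :: "nat \<Rightarrow> real"
    and \<mu> :: "(nat \<Rightarrow> nat \<times> nat) measure"
  assumes LG: "LG_system p m a b c d"
    and sets_mu: "sets \<mu> = sets (restrict_space borel (SigmaD p m))"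
    and fin: "finite_measure \<mu>"
  defines "\<nu> \<equiv> distr \<mu> (borel :: (real \<times> real) measure) (coding a b c d)"
  shows
    "(two_dimensional p m \<longrightarrow>
       (\<forall>w\<in>SigmaD p m.
          ((\<lambda>n. ereal_of_enat (Rmax p m n w) / ereal (real n)) \<longlonglongrightarrow> 0) \<longrightarrow>
          Liminf (at_right 0) (\<lambda>r. elog (measure \<nu> (cball (coding a b c d w) r)) / ereal (ln r))
            \<ge> Liminf sequentially
                 (\<lambda>n. elog (measure \<mu> (approx_square p m a b n w)) / ereal (ln (bprod b w n)))))
     \<and>
     (\<forall>w\<in>SigmaD p m.
          Liminf (at_right 0) (\<lambda>r. elog (measure \<nu> (cball (coding a b c d w) r)) / ereal (ln r))
            \<le> Liminf sequentially
                 (\<lambda>n. elog (measure \<mu> (approx_square p m a b n w)) / ereal (ln (bprod b w n))))"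
proof (intro conjI impI ballI)
  interpret lg_measure p m a c b d \<mu>
    by (intro lg_measure.intro lg_system.intro lg_measure_axioms.intro LG sets_mu fin)
  fix w assume w: "w \<in> SigmaD p m"
  show "Liminf (at_right 0) (\<lambda>r. elog (measure \<nu> (cball (coding a b c d w) r)) / ereal (ln r))
      \<le> Liminf sequentially (\<lambda>n. elog (measure \<mu> (approx_square p m a b n w)) / ereal (ln (bprod b w n)))"
    unfolding \<nu>_def by (rule upper_bound[OF w])
next
  fix w assume two_dim: "two_dimensional p m" and w: "w \<in> SigmaD p m"
    and lim: "(\<lambda>n. ereal_of_enat (Rmax p m n w) / ereal (real n)) \<longlonglongrightarrow> 0"
  interpret lg_measure p m a c b d \<mu>
    by (intro lg_measure.intro lg_system.intro lg_measure_axioms.intro LG sets_mu fin)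
  obtain M where M: "(\<lambda>n. real (M n) / real n) \<longlonglongrightarrow> 0" "\<And>n. recurs_within w n (M n)"
    using recurrence_window[OF lim] by blast
  interpret lg_recurrent p m a c b d \<mu> w M
    by (intro lg_recurrent.intro lg_measure_axioms lg_two_dim.intro lg_system_axioms
        lg_two_dim_axioms.intro lg_recurrent_axioms.intro two_dim w M)
  show "Liminf sequentially (\<lambda>n. elog (measure \<mu> (approx_square p m a b n w)) / ereal (ln (bprod b w n)))
      \<le> Liminf (at_right 0) (\<lambda>r. elog (measure \<nu> (cball (coding a b c d w) r)) / ereal (ln r))"
    unfolding \<nu>_def by (rule lower_bound)
qed

end
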